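(* Let $X$ be a real linear Polish space and let $\Omega\subset X$ be a nonempty convex open set. If $f:\Omega\to\mathbb{R}$ is Jensen convex and $f$ is bounded above on some set $T\subset\Omega$ which is $D$-measurable and not Haar meager, then $f$ is continuous on $\Omega$.
   Context: A real linear Polish space is a real topological vector space whose topology is Polish. A set $A\subset X$ is Haar meager if there exist a Borel set $B\subset X$ with $A\subset B$, a compact metric space $K$ and a continuous function $g:K\to X$ such that $g^{-1}(B+x)$ is meager in $K$ for all $x\in X$. A set $A\subset X$ is $D$-measurable if $A=B\cup M$ for some Borel set $B\subset X$ and some Haar meager set $M\subset X$. A function $f:\Omega\to\mathbb{R}$ is Jensen convex if $f\left(\frac{x+y}{2}\right)\le\frac{f(x)+f(y)}{2}$ for all $x,y\in\Omega$. *)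

theory Defs
  imports "HOL-Analysis.Analysis"
begin

definition nowhere_dense_in :: "'a topology \<Rightarrow> 'a set \<Rightarrow> bool" where
  "nowhere_dense_in T N \<longleftrightarrow> N \<subseteq> topspace T \<and> T interior_of (T closure_of N) = {}"

definition meager_in :: "'a topology \<Rightarrow> 'a set \<Rightarrow> bool" where
  "meager_in T S \<longleftrightarrow> (\<exists>F. countable F \<and> (\<forall>N\<in>F. nowhere_dense_in T N) \<and> S \<subseteq> \<Union>F)"

text \<open>The compact metric space K is represented (up to homeomorphism)
  as a nonempty compact subset of the Hilbert-cube-containing Polish space nat => real
  with the product topology; every compact metric space embeds there.\<close>
definition haar_meager :: "'a::{real_vector,topological_space} set \<Rightarrow> bool" where
  "haar_meager A \<longleftrightarrow>
     (\<exists>B (K :: (nat \<Rightarrow> real) set) (g :: (nat \<Rightarrow> real) \<Rightarrow> 'a).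
        B \<in> sets borel \<and> A \<subseteq> B \<and> K \<noteq> {} \<and> compact K \<and> continuous_on K g \<and>
        (\<forall>x. meager_in (top_of_set K) {k \<in> K. g k \<in> (\<lambda>b. b + x) ` B}))"

definition D_measurable :: "'a::{real_vector,topological_space} set \<Rightarrow> bool" where
  "D_measurable A \<longleftrightarrow> (\<exists>B M. B \<in> sets borel \<and> haar_meager M \<and> A = B \<union> M)"

definition jensen_convex_on :: "'a::real_vector set \<Rightarrow> ('a \<Rightarrow> real) \<Rightarrow> bool" where
  "jensen_convex_on \<Omega> f \<longleftrightarrow>
     (\<forall>x\<in>\<Omega>. \<forall>y\<in>\<Omega>. f ((1/2) *\<^sub>R (x + y)) \<le> (f x + f y) / 2)"

end

theory Submission
  imports Defs
begin

(* Suppose f is Jensen convex on \<Omega>, bounded above by M on T, but not continuous.  By the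
   Bernstein-Doetsch theorem f is then unbounded above on every nonempty open subset of \<Omega>.
   Let q enumerate a dense subset of \<Omega>, every point infinitely often.  We choose vectors v n
   with f (q n + v n / 8) \<ge> n and so small that h(t) = \<Sum>n t n *\<^sub>R v n converges uniformly
   on the Hilbert cube; h is then continuous and midpoint affine.  Since T is D-measurable and
   not Haar meager, a Kuratowski-Ulam argument on the compact set K \<times> cube (K a compact witness
   for the Haar meager part of T) shows that some translate a + h pulls the Borel part of T
   back to a set G that is comeager in a nonempty open subset of the cube.  Category arguments
   in the cube give a point y and an index N such that y and all y(j := 3/4), j \<ge> N, are
   midpoints of pairs in G; by Jensen convexity p = a + h y and p + v j / 4 lie in the sublevel
   set {f \<le> M}.  Writing q j + v j / 8 as the midpoint of p + v j / 4 and 2 q j - p for q j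
   close to p and j large then contradicts f (q j + v j / 8) \<ge> j. *)

text \<open>The space is only assumed to carry a topology in which addition and scalar multiplication
  are continuous; these lemmas make the two hypotheses usable for composite maps.\<close>

lemma continuous_on_add_tvs:
  fixes \<phi> \<psi> :: "'b::topological_space \<Rightarrow> 'a::{real_vector,topological_space}"
  assumes add_cont: "continuous_on UNIV (\<lambda>p::'a \<times> 'a. fst p + snd p)"
    and "continuous_on S \<phi>" "continuous_on S \<psi>"
  shows "continuous_on S (\<lambda>z. \<phi> z + \<psi> z)"
proof -
  have "continuous_on S (\<lambda>z. (\<phi> z, \<psi> z))" by (intro continuous_on_Pair assms)
  moreover have "continuous_on ((\<lambda>z. (\<phi> z, \<psi> z)) ` S) (\<lambda>p. fst p + snd p)"
    by (rule continuous_on_subset[OF add_cont]) simp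
  ultimately have "continuous_on S ((\<lambda>p. fst p + snd p) \<circ> (\<lambda>z. (\<phi> z, \<psi> z)))"
    by (rule continuous_on_compose)
  then show ?thesis by (simp add: o_def)
qed

lemma continuous_on_scaleR_tvs:
  fixes \<phi> :: "'b::topological_space \<Rightarrow> 'a::{real_vector,topological_space}" and a :: "'b \<Rightarrow> real"
  assumes scale_cont: "continuous_on UNIV (\<lambda>p::real \<times> 'a. fst p *\<^sub>R snd p)"
    and "continuous_on S a" "continuous_on S \<phi>"
  shows "continuous_on S (\<lambda>z. a z *\<^sub>R \<phi> z)"
proof -
  have "continuous_on S (\<lambda>z. (a z, \<phi> z))" by (intro continuous_on_Pair assms)
  moreover have "continuous_on ((\<lambda>z. (a z, \<phi> z)) ` S) (\<lambda>p. fst p *\<^sub>R snd p)"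
    by (rule continuous_on_subset[OF scale_cont]) simp
  ultimately have "continuous_on S ((\<lambda>p. fst p *\<^sub>R snd p) \<circ> (\<lambda>z. (a z, \<phi> z)))"
    by (rule continuous_on_compose)
  then show ?thesis by (simp add: o_def)
qed

lemma tendsto_add_tvs:
  fixes a b :: "'b \<Rightarrow> 'a::{real_vector,topological_space}"
  assumes add_cont: "continuous_on UNIV (\<lambda>p::'a \<times> 'a. fst p + snd p)"
    and "(a \<longlongrightarrow> x) F" "(b \<longlongrightarrow> y) F"
  shows "((\<lambda>n. a n + b n) \<longlongrightarrow> x + y) F"
  using continuous_on_tendsto_compose[OF add_cont tendsto_Pair[OF assms(2,3)]] by simp

lemma tendsto_scaleR_tvs:
  fixes a :: "'b \<Rightarrow> 'a::{real_vector,topological_space}"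
  assumes scale_cont: "continuous_on UNIV (\<lambda>p::real \<times> 'a. fst p *\<^sub>R snd p)"
    and "(a \<longlongrightarrow> x) F"
  shows "((\<lambda>n. c *\<^sub>R a n) \<longlongrightarrow> c *\<^sub>R x) F"
  using continuous_on_tendsto_compose[OF scale_cont tendsto_Pair[OF tendsto_const assms(2)]] by simp

lemma open_affine_vimage:
  fixes U :: "'a::{real_vector,topological_space} set"
  assumes add_cont: "continuous_on UNIV (\<lambda>p::'a \<times> 'a. fst p + snd p)"
    and scale_cont: "continuous_on UNIV (\<lambda>p::real \<times> 'a. fst p *\<^sub>R snd p)"
    and "open U"
  shows "open ((\<lambda>y. c *\<^sub>R y + d) -` U)"
proof -
  have "continuous_on UNIV (\<lambda>y::'a. c *\<^sub>R y + d)"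
    by (intro continuous_on_add_tvs[OF add_cont] continuous_on_scaleR_tvs[OF scale_cont]
        continuous_on_const continuous_on_id)
  with \<open>open U\<close> show ?thesis using open_vimage by blast
qed

section \<open>Jensen convex functions: the Bernstein-Doetsch theorem\<close>

lemma jensen_halving:
  fixes f :: "'a::real_vector \<Rightarrow> real"
  assumes J: "jensen_convex_on \<Omega> f" and C: "convex \<Omega>" and q: "q \<in> \<Omega>" and qv: "q + v \<in> \<Omega>"
  shows "q + (1/2)^n *\<^sub>R v \<in> \<Omega> \<and> f (q + (1/2)^n *\<^sub>R v) \<le> (1 - (1/2)^n) * f q + (1/2)^n * f (q + v)"
proof (induction n)
  case 0
  then show ?case using qv by simp
next
  case (Suc n)
  define h :: real where "h = (1/2)^n"
  have h01: "0 \<le> h" "h \<le> 1" unfolding h_def by (auto simp: power_le_one)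
  have "(1 - h/2) *\<^sub>R q + (h/2) *\<^sub>R (q + v) \<in> \<Omega>"
    using C q qv h01 unfolding convex_def by auto
  moreover have "(1 - h/2) *\<^sub>R q + (h/2) *\<^sub>R (q + v) = q + (1/2)^(Suc n) *\<^sub>R v"
    by (simp add: h_def algebra_simps)
  ultimately have mem: "q + (1/2)^(Suc n) *\<^sub>R v \<in> \<Omega>" by simp
  have mid: "q + (1/2)^(Suc n) *\<^sub>R v = (1/2) *\<^sub>R (q + (q + h *\<^sub>R v))"
    by (simp add: h_def algebra_simps flip: scaleR_add_left)
  have "f (q + (1/2)^(Suc n) *\<^sub>R v) \<le> (f q + f (q + h *\<^sub>R v)) / 2"
    unfolding mid using J q Suc.IH unfolding jensen_convex_on_def h_def by blast
  also have "\<dots> \<le> (f q + ((1 - h) * f q + h * f (q + v))) / 2"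
    using Suc.IH unfolding h_def by auto
  also have "\<dots> = (1 - (1/2)^(Suc n)) * f q + (1/2)^(Suc n) * f (q + v)"
    unfolding h_def by (simp add: field_simps)
  finally show ?case using mem by blast
qed

text \<open>If f is bounded by c at q \<plusminus> v, then on the dyadic points of the segment f differs
  from f q by at most (c - f q) / 2^n: the upper bound comes from the halving estimate,
  the lower bound from the Jensen inequality at q itself.\<close>

lemma jensen_symmetric_estimate:
  fixes f :: "'a::real_vector \<Rightarrow> real"
  assumes J: "jensen_convex_on \<Omega> f" and C: "convex \<Omega>" and q: "q \<in> \<Omega>"
    and mem: "q + v \<in> \<Omega>" "q + (-v) \<in> \<Omega>" and bd: "f (q + v) \<le> c" "f (q + (-v)) \<le> c"
  shows "\<bar>f (q + (1/2)^n *\<^sub>R v) - f q\<bar> \<le> (1/2)^n * (c - f q)"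
proof -
  define h :: real where "h = (1/2)^n"
  have h01: "0 \<le> h" "h \<le> 1" unfolding h_def by (auto simp: power_le_one)
  from jensen_halving[OF J C q mem(1), of n] have A: "q + h *\<^sub>R v \<in> \<Omega>"
      "f (q + h *\<^sub>R v) \<le> (1 - h) * f q + h * f (q + v)" unfolding h_def by auto
  from jensen_halving[OF J C q mem(2), of n] have B: "q + h *\<^sub>R (-v) \<in> \<Omega>"
      "f (q + h *\<^sub>R (-v)) \<le> (1 - h) * f q + h * f (q + (-v))" unfolding h_def by auto
  have "(1/2) *\<^sub>R ((q + h *\<^sub>R v) + (q + h *\<^sub>R (-v))) = q"
    by (simp add: algebra_simps flip: scaleR_add_left)
  then have lower: "f q \<le> (f (q + h *\<^sub>R v) + f (q + h *\<^sub>R (-v))) / 2"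
    using J A(1) B(1) unfolding jensen_convex_on_def by metis
  have "h * f (q + v) \<le> h * c" "h * f (q + (-v)) \<le> h * c"
    using bd h01 by (auto intro: mult_left_mono)
  then show ?thesis
    using A(2) B(2) lower unfolding h_def[symmetric] abs_le_iff by (simp add: algebra_simps)
qed

lemma jensen_continuous_if_locally_bounded:
  fixes f :: "'a::{real_vector,metric_space} \<Rightarrow> real"
  assumes add_cont: "continuous_on UNIV (\<lambda>p::'a \<times> 'a. fst p + snd p)"
    and scale_cont: "continuous_on UNIV (\<lambda>p::real \<times> 'a. fst p *\<^sub>R snd p)"
    and J: "jensen_convex_on \<Omega> f" and C: "convex \<Omega>"
    and V: "open V" "q \<in> V" "V \<subseteq> \<Omega>" and bd: "\<forall>y\<in>V. f y \<le> c"
  shows "continuous (at q within \<Omega>) f"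
  unfolding continuous_within_topological
proof (intro allI impI)
  fix B :: "real set" assume B: "open B" "f q \<in> B"
  then obtain e where e: "e > 0" "ball (f q) e \<subseteq> B" by (meson openE)
  have cq: "f q \<le> c" using bd V by auto
  obtain n where n: "(1/2::real)^n < e / (c - f q + 1)"
    using real_arch_pow_inv[of "e / (c - f q + 1)" "1/2"] e cq by auto
  have small: "(1/2::real)^n * (c - f q) < e"
  proof -
    have "(1/2::real)^n * (c - f q) \<le> (1/2)^n * (c - f q + 1)" by simp
    also have "\<dots> < e / (c - f q + 1) * (c - f q + 1)"
      using n cq by (intro mult_strict_right_mono) auto
    finally show ?thesis using cq by simp
  qed
  define V0 where "V0 = {v. q + v \<in> V \<and> q + (-v) \<in> V}"
  have "V0 = (\<lambda>v. 1 *\<^sub>R v + q) -` V \<inter> (\<lambda>v. (-1) *\<^sub>R v + q) -` V"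
    unfolding V0_def by (auto simp: algebra_simps)
  then have oV0: "open V0"
    using open_affine_vimage[OF add_cont scale_cont V(1)] by (metis open_Int)
  define A where "A = (\<lambda>y. (2^n) *\<^sub>R y + (- (2^n)) *\<^sub>R q) -` V0"
  have oA: "open A" unfolding A_def by (rule open_affine_vimage[OF add_cont scale_cont oV0])
  have qA: "q \<in> A" using V unfolding A_def V0_def by simp
  have "f y \<in> B" if y: "y \<in> A" for y
  proof -
    define v where "v = (2^n) *\<^sub>R y + (- (2^n)) *\<^sub>R q"
    have vV: "q + v \<in> V" "q + (-v) \<in> V" using y unfolding A_def v_def V0_def by (auto simp: algebra_simps)
    have yeq: "y = q + (1/2)^n *\<^sub>R v"
      unfolding v_def by (simp add: algebra_simps power_one_over)
    have "\<bar>f (q + (1/2)^n *\<^sub>R v) - f q\<bar> \<le> (1/2)^n * (c - f q)"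
      by (rule jensen_symmetric_estimate[OF J C]) (use vV V bd in auto)
    then have "\<bar>f y - f q\<bar> < e" using small yeq by simp
    then show ?thesis using e by (auto simp: dist_real_def)
  qed
  then show "\<exists>A. open A \<and> q \<in> A \<and> (\<forall>y\<in>\<Omega>. y \<in> A \<longrightarrow> f y \<in> B)"
    using oA qA by blast
qed

text \<open>Extend the segment from p0 \<in> U through q slightly
  beyond q to a point r \<in> \<Omega>; the homothety with centre r and ratio h maps U onto a
  neighbourhood V of q, and the halving estimate bounds f on V.\<close>

lemma jensen_bound_spreads:
  fixes f :: "'a::{real_vector,metric_space} \<Rightarrow> real"
  assumes add_cont: "continuous_on UNIV (\<lambda>p::'a \<times> 'a. fst p + snd p)"
    and scale_cont: "continuous_on UNIV (\<lambda>p::real \<times> 'a. fst p *\<^sub>R snd p)"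
    and J: "jensen_convex_on \<Omega> f" and C: "convex \<Omega>" and O: "open \<Omega>"
    and U: "open U" "p0 \<in> U" "U \<subseteq> \<Omega>" and bd: "\<forall>u\<in>U. f u \<le> c" and q: "q \<in> \<Omega>"
  shows "\<exists>V c'. open V \<and> q \<in> V \<and> V \<subseteq> \<Omega> \<and> (\<forall>y\<in>V. f y \<le> c')"
proof -
  have "continuous_on UNIV (\<lambda>s::real. s *\<^sub>R (q - p0) + q)"
    by (intro continuous_on_add_tvs[OF add_cont] continuous_on_scaleR_tvs[OF scale_cont]
        continuous_on_const continuous_on_id)
  then have "open ((\<lambda>s::real. s *\<^sub>R (q - p0) + q) -` \<Omega>)" using O open_vimage by blast
  moreover have "0 \<in> (\<lambda>s::real. s *\<^sub>R (q - p0) + q) -` \<Omega>" using q by simp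
  ultimately obtain \<eta> where eta: "\<eta> > 0" "ball 0 \<eta> \<subseteq> (\<lambda>s::real. s *\<^sub>R (q - p0) + q) -` \<Omega>"
    by (meson openE)
  obtain m where m: "(1/2::real)^m < \<eta>" using real_arch_pow_inv[of \<eta> "1/2"] eta by auto
  define h :: real where "h = (1/2)^(Suc m)"
  have h: "0 < h" "h \<le> 1/2" unfolding h_def by (auto simp: power_le_one)
  define \<epsilon> where "\<epsilon> = h / (1 - h)"
  have "\<epsilon> \<le> 2 * h" unfolding \<epsilon>_def using h by (simp add: field_simps)
  also have "2 * h = (1/2)^m" unfolding h_def by simp
  finally have "\<epsilon> \<in> ball 0 \<eta>" using m h by (simp add: \<epsilon>_def dist_real_def)
  define r where "r = \<epsilon> *\<^sub>R (q - p0) + q"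
  have rO: "r \<in> \<Omega>" using eta \<open>\<epsilon> \<in> ball 0 \<eta>\<close> unfolding r_def by auto
  have r1: "(1 - h) *\<^sub>R r = q - h *\<^sub>R p0"
  proof -
    have "(1 - h) * \<epsilon> = h" unfolding \<epsilon>_def using h by simp
    then have "(1 - h) *\<^sub>R r = h *\<^sub>R (q - p0) + (1 - h) *\<^sub>R q"
      unfolding r_def by (simp add: scaleR_add_right)
    then show ?thesis by (simp add: algebra_simps)
  qed
  define V where "V = (\<lambda>y. (1/h) *\<^sub>R y + (p0 - (1/h) *\<^sub>R q)) -` U"
  have oV: "open V" unfolding V_def by (rule open_affine_vimage[OF add_cont scale_cont U(1)])
  have qV: "q \<in> V" unfolding V_def using U by simp
  have main: "y \<in> \<Omega> \<and> f y \<le> (1 - h) * f r + h * c" if y: "y \<in> V" for y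
  proof -
    define u where "u = (1/h) *\<^sub>R (y - q) + p0"
    have uU: "u \<in> U" using y unfolding V_def u_def by (simp add: algebra_simps)
    have hu: "h *\<^sub>R u = (y - q) + h *\<^sub>R p0" unfolding u_def using h by (simp add: scaleR_add_right)
    have "r + h *\<^sub>R (u - r) = (1 - h) *\<^sub>R r + h *\<^sub>R u" by (simp add: algebra_simps)
    then have yeq: "y = r + h *\<^sub>R (u - r)" unfolding r1 hu by simp
    have "r + (u - r) \<in> \<Omega>" using uU U by auto
    from jensen_halving[OF J C rO this, of "Suc m"]
    have "y \<in> \<Omega>" "f y \<le> (1 - h) * f r + h * f u"
      using yeq unfolding h_def by auto
    moreover have "h * f u \<le> h * c" using bd uU h by (intro mult_left_mono) auto
    ultimately show ?thesis by auto
  qed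
  show ?thesis using oV qV main by blast
qed

theorem bernstein_doetsch:
  fixes f :: "'a::{real_vector,metric_space} \<Rightarrow> real"
  assumes add_cont: "continuous_on UNIV (\<lambda>p::'a \<times> 'a. fst p + snd p)"
    and scale_cont: "continuous_on UNIV (\<lambda>p::real \<times> 'a. fst p *\<^sub>R snd p)"
    and J: "jensen_convex_on \<Omega> f" and C: "convex \<Omega>" and O: "open \<Omega>"
    and U: "open U" "p0 \<in> U" "U \<subseteq> \<Omega>" and bd: "\<forall>u\<in>U. f u \<le> c"
  shows "continuous_on \<Omega> f"
  unfolding continuous_on_eq_continuous_within
proof
  fix q assume q: "q \<in> \<Omega>"
  from jensen_bound_spreads[OF add_cont scale_cont J C O U bd q] obtain V c' where
    "open V" "q \<in> V" "V \<subseteq> \<Omega>" "\<forall>y\<in>V. f y \<le> c'" by blast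
  from jensen_continuous_if_locally_bounded[OF add_cont scale_cont J C this]
  show "continuous (at q within \<Omega>) f" .
qed

corollary jensen_discontinuous_unbounded:
  fixes f :: "'a::{real_vector,metric_space} \<Rightarrow> real"
  assumes add_cont: "continuous_on UNIV (\<lambda>p::'a \<times> 'a. fst p + snd p)"
    and scale_cont: "continuous_on UNIV (\<lambda>p::real \<times> 'a. fst p *\<^sub>R snd p)"
    and J: "jensen_convex_on \<Omega> f" and C: "convex \<Omega>" and O: "open \<Omega>"
    and discont: "\<not> continuous_on \<Omega> f"
    and U: "open U" "U \<subseteq> \<Omega>" "U \<noteq> {}"
  shows "\<exists>u\<in>U. c < f u"
proof (rule ccontr)
  assume "\<not> (\<exists>u\<in>U. c < f u)"
  then have "\<forall>u\<in>U. f u \<le> c" by (simp add: not_less)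
  moreover obtain p0 where "p0 \<in> U" using U(3) by blast
  ultimately show False
    using bernstein_doetsch[OF add_cont scale_cont J C O U(1) _ U(2)] discont by blast
qed

section \<open>Meager sets in a topological space\<close>

lemma nowhere_dense_subset:
  assumes "nowhere_dense_in X N" "M \<subseteq> N"
  shows "nowhere_dense_in X M"
proof -
  have "X interior_of (X closure_of M) \<subseteq> X interior_of (X closure_of N)"
    using assms(2) by (intro interior_of_mono closure_of_mono)
  with assms show ?thesis unfolding nowhere_dense_in_def by blast
qed

lemma meager_in_subset:
  "meager_in X S \<Longrightarrow> T \<subseteq> S \<Longrightarrow> meager_in X T"
proof -
  assume "meager_in X S" "T \<subseteq> S"
  then obtain F where "countable F" "\<forall>N\<in>F. nowhere_dense_in X N" "S \<subseteq> \<Union>F"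
    unfolding meager_in_def by auto
  with \<open>T \<subseteq> S\<close> show ?thesis unfolding meager_in_def by (meson order_trans)
qed

lemma meager_in_empty [simp]: "meager_in X {}"
  unfolding meager_in_def by (rule exI[of _ "{}"]) auto

lemma nowhere_dense_meager: "nowhere_dense_in X N \<Longrightarrow> meager_in X N"
  unfolding meager_in_def by (rule exI[of _ "{N}"]) auto

lemma meager_in_UN:
  assumes "countable I" "\<And>i. i \<in> I \<Longrightarrow> meager_in X (A i)"
  shows "meager_in X (\<Union>i\<in>I. A i)"
proof -
  from assms(2) have "\<forall>i\<in>I. \<exists>F. countable F \<and> (\<forall>N\<in>F. nowhere_dense_in X N) \<and> A i \<subseteq> \<Union>F"
    unfolding meager_in_def by simp
  then obtain F where F: "\<And>i. i \<in> I \<Longrightarrow> countable (F i) \<and> (\<forall>N\<in>F i. nowhere_dense_in X N) \<and> A i \<subseteq> \<Union>(F i)"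
    by metis
  have "countable (\<Union>i\<in>I. F i)" using F assms(1) by (intro countable_UN) auto
  moreover have "\<forall>N\<in>(\<Union>i\<in>I. F i). nowhere_dense_in X N" using F by auto
  moreover have "(\<Union>i\<in>I. A i) \<subseteq> \<Union>(\<Union>i\<in>I. F i)"
  proof
    fix x assume "x \<in> (\<Union>i\<in>I. A i)"
    then obtain i where "i \<in> I" "x \<in> A i" by auto
    then have "A i \<subseteq> \<Union>(F i)" using F by simp
    then have "x \<in> \<Union>(F i)" using \<open>x \<in> A i\<close> by (rule subsetD)
    with \<open>i \<in> I\<close> show "x \<in> \<Union>(\<Union>i\<in>I. F i)" by auto
  qed
  ultimately show ?thesis unfolding meager_in_def by (intro exI[of _ "\<Union>i\<in>I. F i"]) simp
qed

lemma meager_in_Un: "meager_in X A \<Longrightarrow> meager_in X B \<Longrightarrow> meager_in X (A \<union> B)"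
proof -
  assume "meager_in X A" "meager_in X B"
  then have "meager_in X (\<Union>b\<in>{True,False}. (if b then A else B))"
    by (intro meager_in_UN) auto
  moreover have "(\<Union>b\<in>{True,False}. (if b then A else B)) = A \<union> B" by auto
  ultimately show ?thesis by simp
qed

lemma baire_open_not_meager:
  assumes X: "locally_compact_space X \<and> regular_space X"
    and U: "openin X U" "U \<noteq> {}"
  shows "\<not> meager_in X U"
proof
  assume "meager_in X U"
  then obtain F where F: "countable F" "\<forall>N\<in>F. nowhere_dense_in X N" "U \<subseteq> \<Union>F"
    unfolding meager_in_def by blast
  let ?G = "(\<lambda>N. X closure_of N) ` F"
  have "X interior_of \<Union>?G = {}"
  proof (rule Baire_category_alt)
    show "completely_metrizable_space X \<or> locally_compact_space X \<and> regular_space X" using X by simp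
    show "countable ?G" using F by simp
    show "closedin X T \<and> X interior_of T = {}" if "T \<in> ?G" for T
      using that F(2) unfolding nowhere_dense_in_def by auto
  qed
  moreover have "U \<subseteq> \<Union>?G"
  proof
    fix x assume "x \<in> U"
    then obtain N where N: "N \<in> F" "x \<in> N" using F(3) by auto
    then have "N \<subseteq> topspace X" using F(2) unfolding nowhere_dense_in_def by auto
    then have "N \<subseteq> X closure_of N" by (rule closure_of_subset)
    then have "x \<in> X closure_of N" using N(2) by (rule subsetD)
    then show "x \<in> \<Union>?G" using N(1) by auto
  qed
  then have "U \<subseteq> X interior_of \<Union>?G" using U(1) by (simp add: interior_of_maximal)
  ultimately show False using U(2) by blast
qed

lemma boundary_nowhere_dense:
  assumes "openin X U"
  shows "nowhere_dense_in X (X closure_of U - U)"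
proof -
  have cl: "closedin X (X closure_of U - U)" using assms by (simp add: closedin_diff)
  have "X interior_of (X closure_of U - U) = {}"
  proof (rule ccontr)
    assume "X interior_of (X closure_of U - U) \<noteq> {}"
    then obtain z where z: "z \<in> X interior_of (X closure_of U - U)" by blast
    let ?O = "X interior_of (X closure_of U - U)"
    have "openin X ?O" by simp
    moreover have "?O \<subseteq> X closure_of U" "?O \<inter> U = {}"
      using interior_of_subset[of X "X closure_of U - U"] by auto
    ultimately have "?O \<inter> X closure_of U = {}"
      using openin_Int_closure_of_eq_empty[of X ?O U] by simp
    then show False using z \<open>?O \<subseteq> X closure_of U\<close> by blast
  qed
  moreover have "X closure_of (X closure_of U - U) = X closure_of U - U" using cl by (rule closure_of_closedin)
  ultimately show ?thesis unfolding nowhere_dense_in_def using closedin_subset[OF cl] by simp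
qed

text \<open>These
  sets form a \<sigma>-algebra containing the open sets, so continuous preimages of Borel sets
  have the Baire property.\<close>

definition baire_property :: "'a topology \<Rightarrow> 'a set \<Rightarrow> bool" where
  "baire_property X A \<longleftrightarrow> A \<subseteq> topspace X \<and> (\<exists>U. openin X U \<and> meager_in X ((A - U) \<union> (U - A)))"

lemma baire_property_open: "openin X U \<Longrightarrow> baire_property X U"
  unfolding baire_property_def using openin_subset by fastforce

lemma baire_property_compl:
  assumes "baire_property X A"
  shows "baire_property X (topspace X - A)"
proof -
  obtain U where U: "openin X U" "meager_in X ((A - U) \<union> (U - A))" "A \<subseteq> topspace X"
    using assms unfolding baire_property_def by blast
  define V where "V = topspace X - X closure_of U"
  have oV: "openin X V" unfolding V_def by (intro openin_diff openin_topspace closedin_closure_of)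
  have "((topspace X - A) - V) \<union> (V - (topspace X - A)) \<subseteq> ((A - U) \<union> (U - A)) \<union> (X closure_of U - U)"
    unfolding V_def using closure_of_subset[OF openin_subset[OF U(1)]] by auto
  moreover have "meager_in X (((A - U) \<union> (U - A)) \<union> (X closure_of U - U))"
    by (intro meager_in_Un U(2) nowhere_dense_meager boundary_nowhere_dense U(1))
  ultimately have m: "meager_in X (((topspace X - A) - V) \<union> (V - (topspace X - A)))"
    by (rule meager_in_subset[rotated])
  show ?thesis unfolding baire_property_def
  proof (intro conjI exI)
    show "topspace X - A \<subseteq> topspace X" by blast
    show "openin X V" by (rule oV)
    show "meager_in X (((topspace X - A) - V) \<union> (V - (topspace X - A)))" by (rule m)
  qed
qed

lemma baire_property_UN:
  assumes "countable I" "\<And>i. i \<in> I \<Longrightarrow> baire_property X (A i)"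
  shows "baire_property X (\<Union>i\<in>I. A i)"
proof -
  from assms(2) have "\<forall>i\<in>I. \<exists>U. openin X U \<and> meager_in X ((A i - U) \<union> (U - A i)) \<and> A i \<subseteq> topspace X"
    unfolding baire_property_def by blast
  then obtain U where U: "\<And>i. i \<in> I \<Longrightarrow> openin X (U i) \<and> meager_in X ((A i - U i) \<union> (U i - A i)) \<and> A i \<subseteq> topspace X"
    by metis
  have U1: "\<And>i. i \<in> I \<Longrightarrow> openin X (U i)" using U by simp
  have U2: "\<And>i. i \<in> I \<Longrightarrow> meager_in X ((A i - U i) \<union> (U i - A i))" using U by simp
  have U3: "\<And>i. i \<in> I \<Longrightarrow> A i \<subseteq> topspace X" using U by simp
  have S: "((\<Union>i\<in>I. A i) - (\<Union>i\<in>I. U i)) \<union> ((\<Union>i\<in>I. U i) - (\<Union>i\<in>I. A i)) \<subseteq> (\<Union>i\<in>I. (A i - U i) \<union> (U i - A i))"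
    by blast
  have M: "meager_in X (\<Union>i\<in>I. (A i - U i) \<union> (U i - A i))"
    using U2 assms(1) by (rule meager_in_UN[rotated])
  have O: "openin X (\<Union>i\<in>I. U i)" using U1 by (intro openin_Union) auto
  have Asub: "(\<Union>i\<in>I. A i) \<subseteq> topspace X" using U3 by (simp add: UN_least)
  show ?thesis unfolding baire_property_def
  proof (intro conjI exI)
    show "(\<Union>i\<in>I. A i) \<subseteq> topspace X" by (rule Asub)
    show "openin X (\<Union>i\<in>I. U i)" by (rule O)
    show "meager_in X (((\<Union>i\<in>I. A i) - (\<Union>i\<in>I. U i)) \<union> ((\<Union>i\<in>I. U i) - (\<Union>i\<in>I. A i)))"
      by (rule meager_in_subset[OF M S])
  qed
qed

lemma baire_property_borel_preimage:
  assumes "continuous_map X euclidean \<phi>" and "E \<in> sets borel"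
  shows "baire_property X {z \<in> topspace X. \<phi> z \<in> E}"
  using assms(2) unfolding sets_borel
proof (induction rule: sigma_sets.induct)
  case (Basic a)
  then have "openin X {z \<in> topspace X. \<phi> z \<in> a}"
    using assms(1) by (simp add: openin_continuous_map_preimage)
  then show ?case by (rule baire_property_open)
next
  case Empty
  then show ?case using baire_property_open[of X "{}"] by simp
next
  case (Compl a)
  have "{z \<in> topspace X. \<phi> z \<in> UNIV - a} = topspace X - {z \<in> topspace X. \<phi> z \<in> a}" by auto
  then show ?case using baire_property_compl[OF Compl.IH] by simp
next
  case (Union A)
  have "{z \<in> topspace X. \<phi> z \<in> \<Union>(range A)} = (\<Union>i\<in>UNIV. {z \<in> topspace X. \<phi> z \<in> A i})" by auto
  then show ?case using baire_property_UN[of UNIV X "\<lambda>i. {z \<in> topspace X. \<phi> z \<in> A i}"] Union.IH by simp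
qed

lemma baire_property_nonmeager:
  assumes "baire_property X A" "\<not> meager_in X A"
  shows "\<exists>U. openin X U \<and> U \<noteq> {} \<and> meager_in X (U - A)"
proof -
  obtain U where U: "openin X U" "meager_in X ((A - U) \<union> (U - A))"
    using assms(1) unfolding baire_property_def by blast
  have "U \<noteq> {}"
  proof
    assume "U = {}"
    then show False using U(2) assms(2) by simp
  qed
  moreover have "meager_in X (U - A)" using U(2) meager_in_subset by blast
  ultimately show ?thesis using U(1) by blast
qed

lemma homeomorphic_map_nowhere_dense:
  assumes h: "homeomorphic_map X Y h" and N: "N \<subseteq> topspace X"
  shows "nowhere_dense_in Y (h ` N) \<longleftrightarrow> nowhere_dense_in X N"
proof -
  have cl: "Y closure_of (h ` N) = h ` (X closure_of N)"
    using homeomorphic_map_closure_of[OF h N] by simp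
  have int: "Y interior_of (h ` (X closure_of N)) = h ` (X interior_of (X closure_of N))"
    using homeomorphic_map_interior_of[OF h closure_of_subset_topspace] by simp
  have "h ` N \<subseteq> topspace Y" using h N homeomorphic_imp_surjective_map by blast
  then show ?thesis unfolding nowhere_dense_in_def cl int using N by auto
qed

lemma homeomorphic_map_meager_in:
  assumes h: "homeomorphic_map X Y h" and S: "meager_in X S"
  shows "meager_in Y (h ` S)"
proof -
  obtain F where F: "countable F" "\<forall>N\<in>F. nowhere_dense_in X N" "S \<subseteq> \<Union>F"
    using S unfolding meager_in_def by blast
  show ?thesis unfolding meager_in_def
  proof (intro exI[of _ "(\<lambda>N. h ` N) ` F"] conjI)
    show "countable ((`) h ` F)" using F by simp
    show "\<forall>N\<in>(`) h ` F. nowhere_dense_in Y N"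
      using F(2) homeomorphic_map_nowhere_dense[OF h] unfolding nowhere_dense_in_def by auto
    show "h ` S \<subseteq> \<Union> ((`) h ` F)" using F(3) by blast
  qed
qed

lemma nowhere_dense_in_open_subtopology:
  assumes W: "openin X W" and N: "N \<subseteq> W"
  shows "nowhere_dense_in (subtopology X W) N \<longleftrightarrow> nowhere_dense_in X N"
proof -
  have WX: "W \<subseteq> topspace X" using W by (rule openin_subset)
  have cl: "(subtopology X W) closure_of N = W \<inter> X closure_of N"
    using N by (simp add: closure_of_subtopology Int_absorb1)
  have int: "(subtopology X W) interior_of (W \<inter> X closure_of N) = W \<inter> X interior_of (W \<inter> X closure_of N)"
    using W by (rule interior_of_subtopology_open)
  have "(W \<inter> X interior_of (W \<inter> X closure_of N) = {}) \<longleftrightarrow> (X interior_of (X closure_of N) = {})"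
  proof
    assume a: "W \<inter> X interior_of (W \<inter> X closure_of N) = {}"
    show "X interior_of (X closure_of N) = {}"
    proof (rule ccontr)
      assume "X interior_of (X closure_of N) \<noteq> {}"
      then obtain z where z: "z \<in> X interior_of (X closure_of N)" by blast
      let ?O = "X interior_of (X closure_of N)"
      have oO: "openin X ?O" by simp
      have "?O \<subseteq> X closure_of N" by (rule interior_of_subset)
      then have "z \<in> X closure_of N" using z by (rule subsetD)
      then have "\<forall>T. z \<in> T \<and> openin X T \<longrightarrow> (\<exists>y. y \<in> N \<and> y \<in> T)" unfolding in_closure_of by simp
      then obtain w where w: "w \<in> N" "w \<in> ?O" using z oO by auto
      have "openin X (W \<inter> ?O)" using W oO by (rule openin_Int)
      moreover have "W \<inter> ?O \<subseteq> W \<inter> X closure_of N" using \<open>?O \<subseteq> X closure_of N\<close> by auto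
      ultimately have "W \<inter> ?O \<subseteq> X interior_of (W \<inter> X closure_of N)" by (rule interior_of_maximal[rotated])
      moreover have "w \<in> W \<inter> ?O" using w N by auto
      ultimately show False using a by auto
    qed
  next
    assume b: "X interior_of (X closure_of N) = {}"
    have "X interior_of (W \<inter> X closure_of N) \<subseteq> X interior_of (X closure_of N)"
      by (intro interior_of_mono) auto
    then show "W \<inter> X interior_of (W \<inter> X closure_of N) = {}" using b by auto
  qed
  moreover have "N \<subseteq> topspace (subtopology X W) \<longleftrightarrow> N \<subseteq> topspace X" using N WX by auto
  ultimately show ?thesis unfolding nowhere_dense_in_def cl int by simp
qed

lemma meager_in_open_subtopology:
  assumes W: "openin X W" and Z: "Z \<subseteq> W"
  shows "meager_in (subtopology X W) Z \<longleftrightarrow> meager_in X Z"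
proof
  assume "meager_in (subtopology X W) Z"
  then obtain F where F: "countable F" "\<forall>N\<in>F. nowhere_dense_in (subtopology X W) N" "Z \<subseteq> \<Union>F"
    unfolding meager_in_def by auto
  have "\<forall>N\<in>F. nowhere_dense_in X N"
  proof
    fix N assume "N \<in> F"
    then have n: "nowhere_dense_in (subtopology X W) N" using F(2) by simp
    then have "N \<subseteq> W" unfolding nowhere_dense_in_def by auto
    with n show "nowhere_dense_in X N" using nowhere_dense_in_open_subtopology[OF W] by simp
  qed
  with F show "meager_in X Z" unfolding meager_in_def by auto
next
  assume "meager_in X Z"
  then obtain F where F: "countable F" "\<forall>N\<in>F. nowhere_dense_in X N" "Z \<subseteq> \<Union>F"
    unfolding meager_in_def by auto
  let ?F = "(\<lambda>N. N \<inter> W) ` F"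
  have "countable ?F" using F(1) by simp
  moreover have "\<forall>N\<in>?F. nowhere_dense_in (subtopology X W) N"
  proof
    fix N' assume "N' \<in> ?F"
    then obtain N where N: "N \<in> F" "N' = N \<inter> W" by auto
    have "nowhere_dense_in X N'" using F(2) N nowhere_dense_subset by blast
    then show "nowhere_dense_in (subtopology X W) N'" using nowhere_dense_in_open_subtopology[OF W] N(2) by simp
  qed
  moreover have "Z \<subseteq> \<Union>?F" using F(3) Z by blast
  ultimately show "meager_in (subtopology X W) Z" unfolding meager_in_def by blast
qed

lemma compact_open_not_meager:
  fixes S :: "'a::metric_space set"
  assumes "compact S" "openin (top_of_set S) U" "U \<noteq> {}"
  shows "\<not> meager_in (top_of_set S) U"
proof (rule baire_open_not_meager[OF _ assms(2,3)])
  have c: "compact_space (top_of_set S)" using assms(1) by (simp add: compact_space_subtopology)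
  have h: "Hausdorff_space (top_of_set S)" by (simp add: Hausdorff_space_subtopology)
  show "locally_compact_space (top_of_set S) \<and> regular_space (top_of_set S)"
    using c h by (simp add: compact_imp_locally_compact_space compact_Hausdorff_imp_regular_space)
qed

lemma second_countable_euclidean:
  "second_countable (euclidean :: 'a::second_countable_topology topology)"
proof -
  obtain B :: "'a set set" where B: "countable B" "topological_basis B"
    using ex_countable_basis by blast
  show ?thesis unfolding second_countable_def
  proof (intro exI[of _ B] conjI ballI allI impI)
    show "countable B" by (rule B(1))
    show "openin euclidean V" if "V \<in> B" for V using B(2) that topological_basis_open by auto
    fix U :: "'a set" and x :: 'a assume "openin euclidean U \<and> x \<in> U"
    then have "open U" "x \<in> U" by auto
    then show "\<exists>V\<in>B. x \<in> V \<and> V \<subseteq> U"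
      by (rule topological_basisE[OF B(2)]) blast
  qed
qed

section \<open>The Kuratowski-Ulam theorem\<close>

lemma continuous_map_pair_const_right:
  assumes "y \<in> topspace Y"
  shows "continuous_map X (prod_topology X Y) (\<lambda>x. (x, y))"
  using continuous_map_const[of X Y y] assms continuous_map_id[unfolded id_def]
  by (intro continuous_map_pairedI) auto

lemma continuous_map_pair_const_left:
  assumes "x \<in> topspace X"
  shows "continuous_map Y (prod_topology X Y) (\<lambda>y. (x, y))"
  using continuous_map_const[of Y X x] assms continuous_map_id[unfolded id_def]
  by (intro continuous_map_pairedI) auto

text \<open>For N nowhere dense in X \<times> Y and V open nonempty in Y, the set of x whose whole
  V-section lies in the closure of N is nowhere dense: it is closed, and an interior point
  would give an open box inside the closure of N.\<close>

lemma nowhere_dense_full_sections: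
  assumes N: "nowhere_dense_in (prod_topology X Y) N" and V: "openin Y V" "V \<noteq> {}"
  shows "nowhere_dense_in X {x \<in> topspace X. \<forall>y\<in>V. (x,y) \<in> prod_topology X Y closure_of N}"
    (is "nowhere_dense_in X ?D")
proof -
  let ?P = "prod_topology X Y"
  let ?C = "?P closure_of N"
  let ?K = "(\<lambda>y. {x \<in> topspace X. (x,y) \<in> ?C}) ` V"
  have "closedin X (\<Inter>?K)"
  proof (rule closedin_Inter)
    show "?K \<noteq> {}" using V(2) by simp
    fix S assume "S \<in> ?K"
    then obtain y where y: "y \<in> V" "S = {x \<in> topspace X. (x,y) \<in> ?C}" by auto
    have "continuous_map X ?P (\<lambda>x. (x, y))"
      using y(1) openin_subset[OF V(1)] by (intro continuous_map_pair_const_right) auto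
    then show "closedin X S" unfolding y(2) by (rule closedin_continuous_map_preimage) simp
  qed
  moreover have "\<Inter>?K = ?D" using V(2) by auto
  ultimately have clD: "closedin X ?D" by simp
  have "X interior_of ?D = {}"
  proof (rule ccontr)
    let ?O = "X interior_of ?D"
    assume "?O \<noteq> {}"
    then obtain z w where zw: "z \<in> ?O" "w \<in> V" using V(2) by blast
    have "openin ?P (?O \<times> V)" using V(1) by (simp add: openin_prod_Times_iff)
    moreover have "?O \<times> V \<subseteq> ?C"
    proof
      fix p assume "p \<in> ?O \<times> V"
      then obtain a b where p: "p = (a,b)" "a \<in> ?D" "b \<in> V"
        using interior_of_subset[of X ?D] by blast
      then show "p \<in> ?C" by simp
    qed
    ultimately have "?O \<times> V \<subseteq> ?P interior_of ?C" by (rule interior_of_maximal[rotated])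
    moreover have "?P interior_of ?C = {}" using N unfolding nowhere_dense_in_def by simp
    ultimately show False using zw by auto
  qed
  moreover have "X closure_of ?D = ?D" using clD by (rule closure_of_closedin)
  ultimately show ?thesis unfolding nowhere_dense_in_def using closedin_subset[OF clD] by simp
qed

lemma nowhere_dense_section:
  assumes N: "nowhere_dense_in (prod_topology X Y) N" and x: "x \<in> topspace X"
    and base: "\<And>U y. openin Y U \<Longrightarrow> y \<in> U \<Longrightarrow> \<exists>V\<in>\<B>. y \<in> V \<and> V \<subseteq> U"
    and no_box: "\<And>V. V \<in> \<B> \<Longrightarrow> V \<noteq> {} \<Longrightarrow>
                   \<not> (\<forall>y\<in>V. y \<in> topspace Y \<and> (x,y) \<in> prod_topology X Y closure_of N)"
  shows "nowhere_dense_in Y {y. (x,y) \<in> N}"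
proof -
  let ?P = "prod_topology X Y"
  let ?C = "?P closure_of N"
  let ?S = "{y. (x,y) \<in> N}"
  have NP: "N \<subseteq> topspace ?P" using N unfolding nowhere_dense_in_def by simp
  then have SY: "?S \<subseteq> topspace Y" by auto
  have "closedin Y {y \<in> topspace Y. (x,y) \<in> ?C}"
    using continuous_map_pair_const_left[OF x] by (rule closedin_continuous_map_preimage) simp
  moreover have "?S \<subseteq> {y \<in> topspace Y. (x,y) \<in> ?C}" using SY closure_of_subset[OF NP] by auto
  ultimately have clS: "Y closure_of ?S \<subseteq> {y \<in> topspace Y. (x,y) \<in> ?C}"
    by (rule closure_of_minimal[rotated])
  have "Y interior_of (Y closure_of ?S) = {}"
  proof (rule ccontr)
    assume "Y interior_of (Y closure_of ?S) \<noteq> {}"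
    then obtain w where w: "w \<in> Y interior_of (Y closure_of ?S)" by blast
    then obtain V where V: "V \<in> \<B>" "w \<in> V" "V \<subseteq> Y interior_of (Y closure_of ?S)"
      using base[of "Y interior_of (Y closure_of ?S)"] by auto
    then have "V \<subseteq> {y \<in> topspace Y. (x,y) \<in> ?C}"
      using interior_of_subset[of Y "Y closure_of ?S"] clS by blast
    then show False using no_box[OF V(1)] V(2) by blast
  qed
  then show ?thesis unfolding nowhere_dense_in_def using SY by simp
qed

theorem kuratowski_ulam:
  assumes Y2: "second_countable Y" and M: "meager_in (prod_topology X Y) M"
  shows "meager_in X {x \<in> topspace X. \<not> meager_in Y {y. (x,y) \<in> M}}"
proof -
  let ?P = "prod_topology X Y"
  obtain \<B> where B: "countable \<B>" "\<And>V. V \<in> \<B> \<Longrightarrow> openin Y V"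
    "\<And>U y. openin Y U \<Longrightarrow> y \<in> U \<Longrightarrow> \<exists>V \<in> \<B>. y \<in> V \<and> V \<subseteq> U"
    using Y2 unfolding second_countable_def by metis
  obtain F where F: "countable F" "\<And>N. N \<in> F \<Longrightarrow> nowhere_dense_in ?P N" "M \<subseteq> \<Union>F"
    using M unfolding meager_in_def by auto
  define D where "D N V = {x \<in> topspace X. \<forall>y\<in>V. (x,y) \<in> ?P closure_of N}" for N V
  define I where "I = F \<times> {V \<in> \<B>. V \<noteq> {}}"
  have "meager_in Y {y. (x,y) \<in> M}"
    if x: "x \<in> topspace X" "x \<notin> (\<Union>i\<in>I. D (fst i) (snd i))" for x
  proof -
    have "nowhere_dense_in Y {y. (x,y) \<in> N}" if N: "N \<in> F" for N
    proof (rule nowhere_dense_section[OF F(2)[OF N] x(1) B(3)])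
      fix V assume "V \<in> \<B>" "V \<noteq> {}"
      then have "x \<notin> D N V" using x(2) N unfolding I_def by auto
      then show "\<not> (\<forall>y\<in>V. y \<in> topspace Y \<and> (x,y) \<in> ?P closure_of N)"
        using x(1) unfolding D_def by auto
    qed
    then have "meager_in Y (\<Union>N\<in>F. {y. (x,y) \<in> N})"
      using F(1) by (intro meager_in_UN nowhere_dense_meager)
    moreover have "{y. (x,y) \<in> M} \<subseteq> (\<Union>N\<in>F. {y. (x,y) \<in> N})" using F(3) by auto
    ultimately show ?thesis by (rule meager_in_subset)
  qed
  then have "{x \<in> topspace X. \<not> meager_in Y {y. (x,y) \<in> M}} \<subseteq> (\<Union>i\<in>I. D (fst i) (snd i))"
    by blast
  moreover have "meager_in X (\<Union>i\<in>I. D (fst i) (snd i))"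
    using F(1) B(1) unfolding I_def D_def
    by (intro meager_in_UN nowhere_dense_meager nowhere_dense_full_sections F(2) B(2)) auto
  ultimately show ?thesis by (rule meager_in_subset[rotated])
qed

lemma kuratowski_ulam_swap:
  assumes X2: "second_countable X" and M: "meager_in (prod_topology X Y) M"
  shows "meager_in Y {y \<in> topspace Y. \<not> meager_in X {x. (x,y) \<in> M}}"
proof -
  have sw: "meager_in (prod_topology Y X) ((\<lambda>(x,y). (y,x)) ` M)"
    using homeomorphic_map_meager_in[OF homeomorphic_map_swap M] .
  have eq: "\<And>x. {y. (x,y) \<in> (\<lambda>(x,y). (y,x)) ` M} = {y. (y,x) \<in> M}"
    by (auto simp: image_iff) force
  from kuratowski_ulam[OF X2 sw] show ?thesis unfolding eq .
qed

lemma kuratowski_ulam_converse: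
  assumes X2: "second_countable X"
    and BX: "\<And>U. openin X U \<Longrightarrow> U \<noteq> {} \<Longrightarrow> \<not> meager_in X U"
    and BY: "\<And>V. openin Y V \<Longrightarrow> V \<noteq> {} \<Longrightarrow> \<not> meager_in Y V"
    and H: "baire_property (prod_topology X Y) H"
    and sec: "\<And>y. y \<in> topspace Y \<Longrightarrow> meager_in X {x. (x,y) \<in> H}"
  shows "meager_in (prod_topology X Y) H"
proof (rule ccontr)
  let ?P = "prod_topology X Y"
  assume "\<not> meager_in ?P H"
  from baire_property_nonmeager[OF H this] obtain W0 where
    W0: "openin ?P W0" "W0 \<noteq> {}" "meager_in ?P (W0 - H)" by blast
  obtain x0 y0 where "(x0, y0) \<in> W0" using W0(2) by auto
  then obtain U V where UV: "openin X U" "openin Y V" "x0 \<in> U" "y0 \<in> V" "U \<times> V \<subseteq> W0"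
    using W0(1) unfolding openin_prod_topology_alt by meson
  have "U \<times> V - H \<subseteq> W0 - H" using UV(5) by blast
  with W0(3) have m: "meager_in ?P (U \<times> V - H)" by (rule meager_in_subset)
  let ?E = "{y \<in> topspace Y. \<not> meager_in X {x. (x,y) \<in> U \<times> V - H}}"
  have mE: "meager_in Y ?E" by (rule kuratowski_ulam_swap[OF X2 m])
  have "\<not> V \<subseteq> ?E"
  proof
    assume "V \<subseteq> ?E"
    then have "meager_in Y V" using mE by (rule meager_in_subset[rotated])
    then show False using BY[OF UV(2)] UV(4) by auto
  qed
  then obtain y where y: "y \<in> V" "y \<notin> ?E" by blast
  have yY: "y \<in> topspace Y" using openin_subset[OF UV(2)] y(1) by blast
  then have m1: "meager_in X {x. (x,y) \<in> U \<times> V - H}" using y(2) by simp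
  have "U \<subseteq> {x. (x,y) \<in> U \<times> V - H} \<union> {x. (x,y) \<in> H}" using y(1) by auto
  moreover have "meager_in X ({x. (x,y) \<in> U \<times> V - H} \<union> {x. (x,y) \<in> H})"
    by (rule meager_in_Un[OF m1 sec[OF yY]])
  ultimately have "meager_in X U" by (rule meager_in_subset[rotated])
  then show False using BX[OF UV(1)] UV(3) by auto
qed
section \<open>Series over the Hilbert cube\<close>

definition cube :: "(nat \<Rightarrow> real) set" where
  "cube = {t. \<forall>i. 0 \<le> t i \<and> t i \<le> 1}"

lemma compact_cube: "compact cube"
proof -
  have eq: "cube = PiE UNIV (\<lambda>i. {0..1::real})" unfolding cube_def PiE_def by auto
  have "compactin (product_topology (\<lambda>i. euclidean) UNIV) (PiE UNIV (\<lambda>i. {0..1::real}))"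
    by (subst compactin_PiE) auto
  then show ?thesis unfolding eq euclidean_product_topology by simp
qed

lemma coordinate_continuous: "continuous_on S (\<lambda>x::nat\<Rightarrow>real. x i)"
  by (rule continuous_on_subset[OF continuous_on_product_coordinates]) simp

definition psum :: "(nat \<Rightarrow> 'a::real_vector) \<Rightarrow> nat \<Rightarrow> (nat \<Rightarrow> real) \<Rightarrow> 'a" where
  "psum v n t = (\<Sum>i<n. t i *\<^sub>R v i)"

lemma psum_Suc: "psum v (Suc n) t = psum v n t + t n *\<^sub>R v n"
  unfolding psum_def by simp

lemma psum_cong: "(\<And>i. i < n \<Longrightarrow> u i = v i) \<Longrightarrow> psum u n t = psum v n t"
  unfolding psum_def by (intro sum.cong) auto

lemma psum_continuous:
  fixes v :: "nat \<Rightarrow> 'a::{real_vector,topological_space}"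
  assumes add_cont: "continuous_on UNIV (\<lambda>p::'a \<times> 'a. fst p + snd p)"
    and scale_cont: "continuous_on UNIV (\<lambda>p::real \<times> 'a. fst p *\<^sub>R snd p)"
  shows "continuous_on S (psum v n)"
proof (induction n)
  case 0
  then show ?case unfolding psum_def by simp
next
  case (Suc n)
  have "continuous_on S (\<lambda>t. psum v n t + t n *\<^sub>R v n)"
    by (intro continuous_on_add_tvs[OF add_cont] continuous_on_scaleR_tvs[OF scale_cont]
        Suc.IH coordinate_continuous continuous_on_const)
  then show ?case unfolding psum_Suc[abs_def] .
qed

lemma psum_midpoint: "psum v n (\<lambda>i. (t i + t' i) / 2) = (1/2) *\<^sub>R (psum v n t + psum v n t')"
proof -
  have "(\<Sum>i<n. ((t i + t' i) / 2) *\<^sub>R v i) = (\<Sum>i<n. (1/2) *\<^sub>R (t i *\<^sub>R v i) + (1/2) *\<^sub>R (t' i *\<^sub>R v i))"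
    by (intro sum.cong) (auto simp: scaleR_add_left add_divide_distrib)
  then show ?thesis unfolding psum_def by (simp add: sum.distrib scaleR_sum_right scaleR_add_right)
qed

lemma psum_shift:
  assumes "j < n"
  shows "psum v n (t(j := t j + s)) = psum v n t + s *\<^sub>R v j"
proof -
  have "psum v n (t(j := t j + s)) = (\<Sum>i<n. t i *\<^sub>R v i + (if i = j then s *\<^sub>R v j else 0))"
    unfolding psum_def by (intro sum.cong) (auto simp: scaleR_add_left)
  also have "\<dots> = psum v n t + s *\<^sub>R v j"
    unfolding psum_def sum.distrib using assms by simp
  finally show ?thesis .
qed

text \<open>The n-th term of the series is uniformly smaller than 2^-n on the cube; this makes the
  partial sums uniformly Cauchy.\<close>

definition fast_on_cube :: "(nat \<Rightarrow> 'a::{real_vector,metric_space}) \<Rightarrow> bool" where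
  "fast_on_cube v \<longleftrightarrow> (\<forall>n. \<forall>t\<in>cube. dist (psum v (Suc n) t) (psum v n t) < (1/2)^n)"

lemma fast_on_cube_tail_bound:
  assumes fast: "fast_on_cube v" and t: "t \<in> cube" and nm: "n \<le> m"
  shows "dist (psum v m t) (psum v n t) \<le> 2 * (1/2)^n"
proof -
  have "dist (psum v (n + k) t) (psum v n t) \<le> 2 * (1/2)^n * (1 - (1/2)^k)" for k
  proof (induction k)
    case (Suc k)
    have "dist (psum v (n + Suc k) t) (psum v n t) \<le>
          dist (psum v (Suc (n + k)) t) (psum v (n + k) t) + dist (psum v (n + k) t) (psum v n t)"
      by (simp add: dist_triangle)
    also have "\<dots> \<le> (1/2)^(n+k) + 2 * (1/2)^n * (1 - (1/2)^k)"
    proof -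
      have "dist (psum v (Suc (n + k)) t) (psum v (n + k) t) < (1/2)^(n+k)"
        using fast t unfolding fast_on_cube_def by blast
      then show ?thesis using Suc.IH by linarith
    qed
    also have "\<dots> = 2 * (1/2)^n * (1 - (1/2)^(Suc k))"
      by (simp add: power_add field_simps)
    finally show ?case .
  qed simp
  moreover obtain k where "m = n + k" using nm le_Suc_ex by blast
  moreover have "2 * (1/2)^n * (1 - (1/2)^k) \<le> 2 * (1/2::real)^n" for k
    by (simp add: mult_left_le)
  ultimately show ?thesis by (meson order_trans)
qed

definition cube_sum :: "(nat \<Rightarrow> 'a::{real_vector,metric_space}) \<Rightarrow> (nat \<Rightarrow> real) \<Rightarrow> 'a" where
  "cube_sum v t = lim (\<lambda>n. psum v n t)"

lemma cube_sum_tendsto: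
  fixes v :: "nat \<Rightarrow> 'a::{real_vector,complete_space}"
  assumes fast: "fast_on_cube v" and t: "t \<in> cube"
  shows "(\<lambda>n. psum v n t) \<longlonglongrightarrow> cube_sum v t"
proof -
  have "Cauchy (\<lambda>n. psum v n t)"
    unfolding Cauchy_altdef2
  proof (intro allI impI)
    fix e :: real assume "e > 0"
    then obtain N where N: "(1/2::real)^N < e/2" using real_arch_pow_inv[of "e/2" "1/2"] by auto
    have "dist (psum v n t) (psum v N t) < e" if "N \<le> n" for n
      using fast_on_cube_tail_bound[OF fast t that] N by linarith
    then show "\<exists>N. \<forall>n\<ge>N. dist (psum v n t) (psum v N t) < e" by blast
  qed
  then show ?thesis
    unfolding cube_sum_def by (simp add: Cauchy_convergent_iff convergent_LIMSEQ_iff)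
qed

lemma cube_sum_distance:
  fixes v :: "nat \<Rightarrow> 'a::{real_vector,complete_space}"
  assumes fast: "fast_on_cube v" and t: "t \<in> cube"
  shows "dist (psum v n t) (cube_sum v t) \<le> 2 * (1/2)^n"
proof (rule LIMSEQ_le_const2)
  show "(\<lambda>m. dist (psum v n t) (psum v m t)) \<longlonglongrightarrow> dist (psum v n t) (cube_sum v t)"
    by (intro tendsto_dist tendsto_const cube_sum_tendsto[OF fast t])
  show "\<exists>N. \<forall>m\<ge>N. dist (psum v n t) (psum v m t) \<le> 2 * (1/2)^n"
    using fast_on_cube_tail_bound[OF fast t] by (metis dist_commute)
qed

text \<open>As a uniform limit of continuous partial sums, the cube sum is continuous.\<close>

lemma cube_sum_continuous:
  fixes v :: "nat \<Rightarrow> 'a::{real_vector,complete_space}"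
  assumes add_cont: "continuous_on UNIV (\<lambda>p::'a \<times> 'a. fst p + snd p)"
    and scale_cont: "continuous_on UNIV (\<lambda>p::real \<times> 'a. fst p *\<^sub>R snd p)"
    and fast: "fast_on_cube v"
  shows "continuous_on cube (cube_sum v)"
proof (rule uniform_limit_theorem)
  show "\<forall>\<^sub>F n in sequentially. continuous_on cube (psum v n)"
    using psum_continuous[OF add_cont scale_cont] by simp
  show "uniform_limit cube (psum v) (cube_sum v) sequentially"
  proof (rule uniform_limitI)
    fix e :: real assume "e > 0"
    then obtain N where N: "(1/2::real)^N < e/2" using real_arch_pow_inv[of "e/2" "1/2"] by auto
    have "dist (psum v n t) (cube_sum v t) < e" if "N \<le> n" "t \<in> cube" for n t
    proof -
      have "(1/2::real)^n \<le> (1/2)^N" using \<open>N \<le> n\<close> by (simp add: power_decreasing)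
      then show ?thesis using cube_sum_distance[OF fast \<open>t \<in> cube\<close>, of n] N by linarith
    qed
    then show "\<forall>\<^sub>F n in sequentially. \<forall>t\<in>cube. dist (psum v n t) (cube_sum v t) < e"
      unfolding eventually_sequentially by blast
  qed
qed simp

lemma cube_sum_midpoint:
  fixes v :: "nat \<Rightarrow> 'a::{real_vector,complete_space}"
  assumes add_cont: "continuous_on UNIV (\<lambda>p::'a \<times> 'a. fst p + snd p)"
    and scale_cont: "continuous_on UNIV (\<lambda>p::real \<times> 'a. fst p *\<^sub>R snd p)"
    and fast: "fast_on_cube v" and t: "t \<in> cube" "t' \<in> cube"
  shows "cube_sum v (\<lambda>i. (t i + t' i) / 2) = (1/2) *\<^sub>R (cube_sum v t + cube_sum v t')"
proof -
  have "0 \<le> (t i + t' i) / 2 \<and> (t i + t' i) / 2 \<le> 1" for i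
  proof -
    have "0 \<le> t i" "t i \<le> 1" "0 \<le> t' i" "t' i \<le> 1" using t unfolding cube_def by auto
    then show ?thesis by simp
  qed
  then have "(\<lambda>i. (t i + t' i) / 2) \<in> cube" unfolding cube_def by simp
  then have "(\<lambda>n. psum v n (\<lambda>i. (t i + t' i) / 2)) \<longlonglongrightarrow> cube_sum v (\<lambda>i. (t i + t' i) / 2)"
    by (rule cube_sum_tendsto[OF fast])
  moreover have "(\<lambda>n. (1/2) *\<^sub>R (psum v n t + psum v n t')) \<longlonglongrightarrow> (1/2) *\<^sub>R (cube_sum v t + cube_sum v t')"
    by (intro tendsto_scaleR_tvs[OF scale_cont] tendsto_add_tvs[OF add_cont] cube_sum_tendsto[OF fast] t)
  ultimately show ?thesis unfolding psum_midpoint by (rule LIMSEQ_unique)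
qed

lemma cube_sum_shift:
  fixes v :: "nat \<Rightarrow> 'a::{real_vector,complete_space}"
  assumes add_cont: "continuous_on UNIV (\<lambda>p::'a \<times> 'a. fst p + snd p)"
    and fast: "fast_on_cube v" and t: "t \<in> cube" "t(j := t j + s) \<in> cube"
  shows "cube_sum v (t(j := t j + s)) = cube_sum v t + s *\<^sub>R v j"
proof -
  have "(\<lambda>n. psum v n t + s *\<^sub>R v j) \<longlonglongrightarrow> cube_sum v t + s *\<^sub>R v j"
    by (intro tendsto_add_tvs[OF add_cont] cube_sum_tendsto[OF fast t(1)] tendsto_const)
  moreover have "\<forall>\<^sub>F n in sequentially. psum v n t + s *\<^sub>R v j = psum v n (t(j := t j + s))"
    unfolding eventually_sequentially by (rule exI[of _ "Suc j"]) (simp add: psum_shift)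
  ultimately have "(\<lambda>n. psum v n (t(j := t j + s))) \<longlonglongrightarrow> cube_sum v t + s *\<^sub>R v j"
    by (rule Lim_transform_eventually)
  with cube_sum_tendsto[OF fast t(2)] show ?thesis by (rule LIMSEQ_unique)
qed

section \<open>Midpoints of comeager sets in the cube\<close>

definition cube_reflect :: "(nat \<Rightarrow> real) \<Rightarrow> (nat \<Rightarrow> real) \<Rightarrow> (nat \<Rightarrow> real)" where
  "cube_reflect y t = (\<lambda>i. 2 * y i - t i)"

lemma cube_reflect_involution [simp]: "cube_reflect y (cube_reflect y t) = t"
  unfolding cube_reflect_def by simp

lemma cube_reflect_continuous: "continuous_on S (cube_reflect y)"
  unfolding cube_reflect_def
  by (intro continuous_on_coordinatewise_then_product continuous_intros coordinate_continuous)

text \<open>If W is a nonempty open reflection-invariant subset of the cube in which G is comeager,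
  then some t \<in> G has its reflection in G as well: otherwise W would be covered by the meager
  set W - G and its reflected image, contradicting the Baire property of the cube.\<close>

lemma reflection_pair_exists:
  fixes W G :: "(nat \<Rightarrow> real) set"
  assumes W: "openin (top_of_set cube) W" "W \<noteq> {}"
    and RW: "\<And>t. t \<in> W \<Longrightarrow> cube_reflect y t \<in> W"
    and Z: "meager_in (top_of_set cube) (W - G)"
  shows "\<exists>t\<in>W. t \<in> G \<and> cube_reflect y t \<in> G"
proof (rule ccontr)
  assume no: "\<not> ?thesis"
  let ?R = "cube_reflect y"
  have sub: "subtopology (top_of_set cube) W = top_of_set W"
    using openin_subset[OF W(1)] by (simp add: subtopology_subtopology Int_absorb1)
  have hm: "homeomorphic_map (top_of_set W) (top_of_set W) ?R"
    unfolding homeomorphic_map_maps homeomorphic_maps_def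
    using RW by (intro exI[of _ ?R]) (simp add: cube_reflect_continuous Pi_iff)
  have "meager_in (top_of_set W) (W - G)"
    using meager_in_open_subtopology[OF W(1), of "W - G"] Z sub by simp
  then have "meager_in (top_of_set W) (?R ` (W - G))" by (rule homeomorphic_map_meager_in[OF hm])
  moreover have "?R ` (W - G) \<subseteq> W" using RW by auto
  ultimately have m2: "meager_in (top_of_set cube) (?R ` (W - G))"
    using meager_in_open_subtopology[OF W(1), of "?R ` (W - G)"] sub by simp
  have "W \<subseteq> (W - G) \<union> ?R ` (W - G)"
  proof
    fix t assume t: "t \<in> W"
    show "t \<in> (W - G) \<union> ?R ` (W - G)"
    proof (cases "t \<in> G")
      case True
      then have "?R t \<in> W - G" using no t RW by blast
      then have "?R (?R t) \<in> ?R ` (W - G)" by blast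
      then show ?thesis by simp
    qed (use t in blast)
  qed
  moreover have "meager_in (top_of_set cube) ((W - G) \<union> ?R ` (W - G))"
    by (rule meager_in_Un[OF Z m2])
  ultimately have "meager_in (top_of_set cube) W" by (rule meager_in_subset[rotated])
  then show False using compact_open_not_meager[OF compact_cube W] by simp
qed

definition cube_box :: "(nat \<Rightarrow> real) \<Rightarrow> (nat \<Rightarrow> real) \<Rightarrow> nat set \<Rightarrow> (nat \<Rightarrow> real) set" where
  "cube_box y \<epsilon> I = {t \<in> cube. \<forall>i\<in>I. \<bar>t i - y i\<bar> < \<epsilon> i}"

lemma openin_cube_box:
  assumes "finite I"
  shows "openin (top_of_set cube) (cube_box y \<epsilon> I)"
proof -
  have eq: "cube_box y \<epsilon> I = cube \<inter> (\<Inter>i\<in>I. (\<lambda>t. t i) -` ball (y i) (\<epsilon> i))"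
    unfolding cube_box_def by (auto simp: dist_real_def abs_minus_commute)
  have "open ((\<lambda>t::nat\<Rightarrow>real. t i) -` ball (y i) (\<epsilon> i))" for i
    using coordinate_continuous[of UNIV i] by (intro open_vimage) auto
  then show ?thesis unfolding eq using assms by (intro openin_open_Int open_INT) auto
qed

text \<open>A box centred at y is invariant under reflection through y if it fits in the cube and
  y is the centre 1/2 in all unconstrained coordinates.\<close>

definition centred_box :: "(nat \<Rightarrow> real) \<Rightarrow> (nat \<Rightarrow> real) \<Rightarrow> nat set \<Rightarrow> bool" where
  "centred_box y \<epsilon> I \<longleftrightarrow> finite I \<and> (\<forall>i\<in>I. 0 < \<epsilon> i \<and> \<epsilon> i \<le> y i \<and> y i + \<epsilon> i \<le> 1) \<and>
                         (\<forall>i. i \<notin> I \<longrightarrow> y i = 1/2)"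

lemma centred_box_center:
  assumes "centred_box y \<epsilon> I"
  shows "y \<in> cube_box y \<epsilon> I"
proof -
  have "0 \<le> y i \<and> y i \<le> 1" for i
    using assms unfolding centred_box_def by (cases "i \<in> I") force+
  then show ?thesis using assms unfolding centred_box_def cube_box_def cube_def by auto
qed

lemma centred_box_reflect:
  assumes box: "centred_box y \<epsilon> I" and t: "t \<in> cube_box y \<epsilon> I"
  shows "cube_reflect y t \<in> cube_box y \<epsilon> I"
proof -
  have "0 \<le> 2 * y i - t i \<and> 2 * y i - t i \<le> 1" for i
  proof (cases "i \<in> I")
    case True
    then have "\<bar>t i - y i\<bar> < \<epsilon> i" "\<epsilon> i \<le> y i" "y i + \<epsilon> i \<le> 1"
      using box t unfolding centred_box_def cube_box_def by auto
    then show ?thesis by arith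
  next
    case False
    then have "y i = 1/2" using box unfolding centred_box_def by simp
    moreover have "0 \<le> t i" "t i \<le> 1" using t unfolding cube_box_def cube_def by auto
    ultimately show ?thesis by simp
  qed
  moreover have "\<forall>i\<in>I. \<bar>2 * y i - t i - y i\<bar> < \<epsilon> i"
    using t unfolding cube_box_def by (auto simp: abs_minus_commute)
  ultimately show ?thesis unfolding cube_box_def cube_def cube_reflect_def by auto
qed

definition cube_midpoints :: "(nat \<Rightarrow> real) set \<Rightarrow> (nat \<Rightarrow> real) set" where
  "cube_midpoints G = {y. \<exists>t\<in>G. \<exists>t'\<in>G. y = (\<lambda>i. (t i + t' i) / 2)}"

lemma centred_box_midpoint:
  assumes box: "centred_box y \<epsilon> I" and Z: "meager_in (top_of_set cube) (cube_box y \<epsilon> I - G)"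
  shows "y \<in> cube_midpoints G"
proof -
  have "openin (top_of_set cube) (cube_box y \<epsilon> I)"
    using box unfolding centred_box_def by (simp add: openin_cube_box)
  moreover have "cube_box y \<epsilon> I \<noteq> {}" using centred_box_center[OF box] by blast
  ultimately obtain t where "t \<in> G" "cube_reflect y t \<in> G"
    using reflection_pair_exists[OF _ _ centred_box_reflect[OF box] Z] by blast
  moreover have "y = (\<lambda>i. (t i + cube_reflect y t i) / 2)" unfolding cube_reflect_def by simp
  ultimately show ?thesis unfolding cube_midpoints_def by blast
qed

lemma real_interior_point:
  fixes A :: "real set"
  assumes "open A" "a \<in> A" "0 \<le> a" "a \<le> 1"
  shows "\<exists>y e. 0 < e \<and> e \<le> y \<and> y + e \<le> 1 \<and> (\<forall>s. \<bar>s - y\<bar> < e \<longrightarrow> s \<in> A)"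
proof -
  obtain r where r: "r > 0" "ball a r \<subseteq> A" using assms(1,2) by (meson openE)
  define d where "d = min (r/2) (1/4)"
  have d: "0 < d" "d \<le> r/2" "d \<le> 1/4" unfolding d_def using r by auto
  show ?thesis
  proof (cases "a \<le> 1/2")
    case True
    show ?thesis
    proof (intro exI conjI allI impI)
      show "0 < d/2" "d/2 \<le> a + d" "a + d + d/2 \<le> 1" using d True assms by auto
      fix s assume "\<bar>s - (a + d)\<bar> < d/2"
      then have "dist a s < r" unfolding dist_real_def using d r(1) by arith
      then have "s \<in> ball a r" by simp
      then show "s \<in> A" using r by blast
    qed
  next
    case False
    show ?thesis
    proof (intro exI conjI allI impI)
      show "0 < d/2" "d/2 \<le> a - d" "a - d + d/2 \<le> 1" using d False assms by auto
      fix s assume "\<bar>s - (a - d)\<bar> < d/2"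
      then have "dist a s < r" unfolding dist_real_def using d r(1) by arith
      then have "s \<in> ball a r" by simp
      then show "s \<in> A" using r by blast
    qed
  qed
qed

lemma cube_open_contains_centred_box:
  assumes Q: "openin (top_of_set cube) Q" "Q \<noteq> {}"
  obtains y \<epsilon> N where "centred_box y \<epsilon> {..<N}" "cube_box y \<epsilon> {..<N} \<subseteq> Q"
proof -
  obtain U where U: "open U" "Q = cube \<inter> U" using Q(1) unfolding openin_open by auto
  obtain c where c: "c \<in> Q" using Q(2) by auto
  have "openin (product_topology (\<lambda>i. euclidean) UNIV) U" "c \<in> U"
    using U c unfolding open_fun_def by auto
  from product_topology_open_contains_basis[OF this]
  obtain X where X: "c \<in> (\<Pi>\<^sub>E i\<in>UNIV. X i)" "\<And>i. open (X i)" "finite {i. X i \<noteq> UNIV}"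
      "(\<Pi>\<^sub>E i\<in>UNIV. X i) \<subseteq> U"
    by auto
  obtain N where N: "\<And>i. X i \<noteq> UNIV \<Longrightarrow> i < N"
    using X(3) unfolding finite_nat_set_iff_bounded by auto
  have "\<exists>y e. 0 < e \<and> e \<le> y \<and> y + e \<le> 1 \<and> (\<forall>s. \<bar>s - y\<bar> < e \<longrightarrow> s \<in> X i)" for i
  proof (rule real_interior_point[OF X(2)])
    show "c i \<in> X i" using X(1) by (auto simp: PiE_UNIV_domain)
    show "0 \<le> c i" "c i \<le> 1" using c U unfolding cube_def by auto
  qed
  then obtain yf ef where yf: "\<And>i. 0 < ef i \<and> ef i \<le> yf i \<and> yf i + ef i \<le> 1 \<and>
                                   (\<forall>s. \<bar>s - yf i\<bar> < ef i \<longrightarrow> s \<in> X i)"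
    by metis
  define y where "y = (\<lambda>i. if i < N then yf i else 1/2)"
  show ?thesis
  proof (rule that[of y ef N])
    show "centred_box y ef {..<N}" unfolding centred_box_def y_def using yf by auto
    have "t i \<in> X i" if t: "t \<in> cube_box y ef {..<N}" for t i
      using t yf[of i] N[of i] unfolding cube_box_def y_def by (cases "i < N") auto
    then show "cube_box y ef {..<N} \<subseteq> Q"
      using X(4) U(2) by (auto simp: PiE_UNIV_domain cube_box_def)
  qed
qed

lemma comeager_cube_midpoints:
  assumes Q: "openin (top_of_set cube) Q" "Q \<noteq> {}" and Z: "meager_in (top_of_set cube) (Q - G)"
  obtains y N where "y \<in> cube" "\<And>j. N \<le> j \<Longrightarrow> y j = 1/2" "y \<in> cube_midpoints G"
    "\<And>j. N \<le> j \<Longrightarrow> y(j := 3/4) \<in> cube_midpoints G"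
proof -
  obtain y \<epsilon> N where box: "centred_box y \<epsilon> {..<N}" and sub: "cube_box y \<epsilon> {..<N} \<subseteq> Q"
    using cube_open_contains_centred_box[OF Q] by blast
  have ZB: "meager_in (top_of_set cube) (B - G)" if "B \<subseteq> cube_box y \<epsilon> {..<N}" for B
    using Z by (rule meager_in_subset) (use that sub in blast)
  have y_half: "y j = 1/2" if "N \<le> j" for j using box that unfolding centred_box_def by simp
  have "y(j := 3/4) \<in> cube_midpoints G" if j: "N \<le> j" for j
  proof (rule centred_box_midpoint)
    show box': "centred_box (y(j := 3/4)) (\<epsilon>(j := 1/4)) (insert j {..<N})"
      using box j unfolding centred_box_def by auto
    have "cube_box (y(j := 3/4)) (\<epsilon>(j := 1/4)) (insert j {..<N}) \<subseteq> cube_box y \<epsilon> {..<N}"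
      using j unfolding cube_box_def by auto
    then show "meager_in (top_of_set cube) (cube_box (y(j := 3/4)) (\<epsilon>(j := 1/4)) (insert j {..<N}) - G)"
      by (rule ZB)
  qed
  moreover have "y \<in> cube_midpoints G" by (rule centred_box_midpoint[OF box ZB]) simp
  moreover have "y \<in> cube" using centred_box_center[OF box] unfolding cube_box_def by simp
  ultimately show ?thesis using that y_half by blast
qed

section \<open>A Steinhaus-type lemma for D-measurable sets\<close>

text \<open>Interleaving identifies (nat \<Rightarrow> real) \<times> (nat \<Rightarrow> real) homeomorphically with nat \<Rightarrow> real,
  so compact subsets of the product may serve as test spaces in the definition of Haar
  meager sets.\<close>

definition interleave :: "(nat \<Rightarrow> real) \<times> (nat \<Rightarrow> real) \<Rightarrow> (nat \<Rightarrow> real)" where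
  "interleave p = (\<lambda>n. if even n then fst p (n div 2) else snd p (n div 2))"

definition deinterleave :: "(nat \<Rightarrow> real) \<Rightarrow> (nat \<Rightarrow> real) \<times> (nat \<Rightarrow> real)" where
  "deinterleave z = ((\<lambda>n. z (2*n)), (\<lambda>n. z (2*n+1)))"

lemma deinterleave_interleave [simp]: "deinterleave (interleave p) = p"
  unfolding deinterleave_def interleave_def by (cases p) auto

lemma interleave_deinterleave [simp]: "interleave (deinterleave z) = z"
  unfolding deinterleave_def interleave_def by (auto simp: fun_eq_iff elim!: evenE oddE)

lemma interleave_continuous: "continuous_on S interleave"
  unfolding interleave_def
proof (intro continuous_on_coordinatewise_then_product)
  fix n
  show "continuous_on S (\<lambda>p. if even n then fst p (n div 2) else snd p (n div 2))"
  proof (cases "even n")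
    case True
    have "continuous_on S ((\<lambda>x::nat\<Rightarrow>real. x (n div 2)) \<circ> fst)"
      by (intro continuous_on_compose continuous_on_fst continuous_on_id coordinate_continuous)
    then show ?thesis using True by (simp add: o_def)
  next
    case False
    have "continuous_on S ((\<lambda>x::nat\<Rightarrow>real. x (n div 2)) \<circ> snd)"
      by (intro continuous_on_compose continuous_on_snd continuous_on_id coordinate_continuous)
    then show ?thesis using False by (simp add: o_def)
  qed
qed

lemma deinterleave_continuous: "continuous_on S deinterleave"
  unfolding deinterleave_def
  by (intro continuous_on_Pair continuous_on_coordinatewise_then_product coordinate_continuous)

lemma interleave_homeomorphic:
  "homeomorphic_map (top_of_set A) (top_of_set (interleave ` A)) interleave"
  unfolding homeomorphic_map_maps
proof (rule exI[of _ deinterleave], unfold homeomorphic_maps_def, intro conjI)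
  show "continuous_map (top_of_set A) (top_of_set (interleave ` A)) interleave"
    by (simp add: interleave_continuous Pi_iff)
  show "continuous_map (top_of_set (interleave ` A)) (top_of_set A) deinterleave"
    by (auto simp: deinterleave_continuous Pi_iff)
  show "\<forall>x\<in>topspace (top_of_set A). deinterleave (interleave x) = x" by simp
  show "\<forall>y\<in>topspace (top_of_set (interleave ` A)). interleave (deinterleave y) = y" by simp
qed


lemma mem_translate_iff: "(a \<in> (\<lambda>b. b + x) ` B) \<longleftrightarrow> (a - x \<in> (B :: 'a::ab_group_add set))"
proof
  assume "a - x \<in> B"
  moreover have "a = (a - x) + x" by simp
  ultimately show "a \<in> (\<lambda>b. b + x) ` B" by (rule rev_image_eqI)
qed auto

lemma not_haar_meager_product_test:
  fixes T :: "'a::{real_vector,topological_space} set"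
    and g :: "(nat \<Rightarrow> real) \<times> (nat \<Rightarrow> real) \<Rightarrow> 'a"
  assumes "\<not> haar_meager T" "B \<in> sets borel" "T \<subseteq> B"
    and C: "compact C" "C \<noteq> {}" and g: "continuous_on C g"
  shows "\<exists>x. \<not> meager_in (top_of_set C) {p \<in> C. g p \<in> (\<lambda>b. b + x) ` B}"
proof (rule ccontr)
  assume "\<not> ?thesis"
  then have "meager_in (top_of_set C) {p \<in> C. g p \<in> (\<lambda>b. b + x) ` B}" for x by blast
  then have "meager_in (top_of_set (interleave ` C)) (interleave ` {p \<in> C. g p \<in> (\<lambda>b. b + x) ` B})" for x
    by (rule homeomorphic_map_meager_in[OF interleave_homeomorphic])
  moreover have "interleave ` {p \<in> C. g p \<in> (\<lambda>b. b + x) ` B} = {z \<in> interleave ` C. (g \<circ> deinterleave) z \<in> (\<lambda>b. b + x) ` B}"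
    for x by auto
  moreover have "compact (interleave ` C)" by (intro compact_continuous_image interleave_continuous C(1))
  moreover have "continuous_on (interleave ` C) (g \<circ> deinterleave)"
    by (rule continuous_on_compose[OF deinterleave_continuous]) (simp add: image_image g)
  ultimately have "haar_meager T"
    unfolding haar_meager_def using assms(2,3) C(2) by (intro exI[of _ B] exI[of _ "interleave ` C"]) auto
  with assms(1) show False by contradiction
qed

lemma baire_property_translate_preimage:
  fixes \<phi> :: "'b::topological_space \<Rightarrow> 'a::{real_vector,topological_space}"
  assumes add_cont: "continuous_on UNIV (\<lambda>p::'a \<times> 'a. fst p + snd p)"
    and "continuous_on S \<phi>" "B \<in> sets borel"
  shows "baire_property (top_of_set S) {p \<in> S. \<phi> p \<in> (\<lambda>b. b + x) ` B}"
proof -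
  have "continuous_map (top_of_set S) euclidean (\<lambda>p. \<phi> p + (- x))"
    unfolding continuous_map_iff_continuous
    by (intro continuous_on_add_tvs[OF add_cont] assms(2) continuous_on_const)
  from baire_property_borel_preimage[OF this assms(3)] show ?thesis
    by (simp add: mem_translate_iff)
qed

text \<open>A non-meager set with the Baire property in a product X \<times> Y, X a Baire space and Y
  second countable, has a section that is comeager in some nonempty open set: it is comeager in
  an open box U \<times> Q, and by Kuratowski-Ulam the bad sections form a meager subset of U.\<close>

lemma nonmeager_product_section:
  assumes Y2: "second_countable Y"
    and BX: "\<And>U. openin X U \<Longrightarrow> U \<noteq> {} \<Longrightarrow> \<not> meager_in X U"
    and G: "baire_property (prod_topology X Y) G" "\<not> meager_in (prod_topology X Y) G"
  shows "\<exists>x\<in>topspace X. \<exists>Q. openin Y Q \<and> Q \<noteq> {} \<and> meager_in Y (Q - {y. (x,y) \<in> G})"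
proof -
  let ?P = "prod_topology X Y"
  obtain W where W: "openin ?P W" "W \<noteq> {}" "meager_in ?P (W - G)"
    using baire_property_nonmeager[OF G] by blast
  obtain x0 y0 where "(x0, y0) \<in> W" using W(2) by auto
  then obtain U Q where UQ: "openin X U" "openin Y Q" "x0 \<in> U" "y0 \<in> Q" "U \<times> Q \<subseteq> W"
    using W(1) unfolding openin_prod_topology_alt by meson
  have "meager_in ?P (U \<times> Q - G)" using W(3) by (rule meager_in_subset) (use UQ(5) in blast)
  then have E: "meager_in X {x \<in> topspace X. \<not> meager_in Y {y. (x,y) \<in> U \<times> Q - G}}"
    by (rule kuratowski_ulam[OF Y2])
  have "\<not> U \<subseteq> {x \<in> topspace X. \<not> meager_in Y {y. (x,y) \<in> U \<times> Q - G}}"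
    using meager_in_subset[OF E] BX[OF UQ(1)] UQ(3) by blast
  then obtain x where x: "x \<in> U" "meager_in Y {y. (x,y) \<in> U \<times> Q - G}"
    using openin_subset[OF UQ(1)] by blast
  moreover have "{y. (x,y) \<in> U \<times> Q - G} = Q - {y. (x,y) \<in> G}" using x(1) by auto
  ultimately show ?thesis using openin_subset[OF UQ(1)] UQ(2,4) by auto
qed

text \<open>The Haar meager part of T is handled by
  Kuratowski-Ulam on K \<times> cube, K the compact test space witnessing that it is Haar meager.\<close>

lemma D_measurable_comeager_pullback:
  fixes T :: "'a::{real_vector,topological_space} set" and h :: "(nat \<Rightarrow> real) \<Rightarrow> 'a"
  assumes add_cont: "continuous_on UNIV (\<lambda>p::'a \<times> 'a. fst p + snd p)"
    and D: "D_measurable T" and nH: "\<not> haar_meager T" and h: "continuous_on cube h"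
  shows "\<exists>B0 a Q. B0 \<in> sets borel \<and> B0 \<subseteq> T \<and> openin (top_of_set cube) Q \<and> Q \<noteq> {} \<and>
                  meager_in (top_of_set cube) (Q - {t \<in> cube. a + h t \<in> B0})"
proof -
  obtain B0 M0 where B0: "B0 \<in> sets borel" "haar_meager M0" "T = B0 \<union> M0"
    using D unfolding D_measurable_def by blast
  obtain B1 and K :: "(nat \<Rightarrow> real) set" and g :: "(nat \<Rightarrow> real) \<Rightarrow> 'a" where
    B1: "B1 \<in> sets borel" "M0 \<subseteq> B1" "K \<noteq> {}" "compact K" "continuous_on K g"
        "\<And>x. meager_in (top_of_set K) {k \<in> K. g k \<in> (\<lambda>b. b + x) ` B1}"
    using B0(2) unfolding haar_meager_def by blast
  define \<phi> where "\<phi> p = g (fst p) + h (snd p)" for p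
  have \<phi>: "continuous_on (K \<times> cube) \<phi>" unfolding \<phi>_def
    by (intro continuous_on_add_tvs[OF add_cont] continuous_on_compose2[OF B1(5)]
        continuous_on_compose2[OF h] continuous_on_fst continuous_on_snd continuous_on_id) auto
  define pre where "pre E x = {p \<in> K \<times> cube. \<phi> p \<in> (\<lambda>b. b + x) ` E}" for E x
  have P: "prod_topology (top_of_set K) (top_of_set cube) = top_of_set (K \<times> cube)" by simp
  have sc: "second_countable (top_of_set S)" for S :: "(nat \<Rightarrow> real) set"
    by (rule second_countable_subtopology[OF second_countable_euclidean])
  have "compact (K \<times> cube)" "K \<times> cube \<noteq> {}"
    using B1(3,4) compact_cube by (auto intro: compact_Times simp: cube_def)
  moreover have "B0 \<union> B1 \<in> sets borel" "T \<subseteq> B0 \<union> B1" using B0 B1 by auto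
  ultimately obtain x where x: "\<not> meager_in (top_of_set (K \<times> cube)) (pre (B0 \<union> B1) x)"
    using not_haar_meager_product_test[OF nH _ _ _ _ \<phi>] unfolding pre_def by blast
  txt \<open>The Haar meager part is negligible: all its vertical sections are meager.\<close>
  have "meager_in (top_of_set (K \<times> cube)) (pre B1 x)"
  proof (rule kuratowski_ulam_converse[OF sc compact_open_not_meager[OF B1(4)]
        compact_open_not_meager[OF compact_cube], unfolded P])
    show "baire_property (top_of_set (K \<times> cube)) (pre B1 x)"
      unfolding pre_def by (rule baire_property_translate_preimage[OF add_cont \<phi> B1(1)])
    fix t assume "t \<in> topspace (top_of_set cube)"
    then have "{k. (k, t) \<in> pre B1 x} = {k \<in> K. g k \<in> (\<lambda>b. b + (x - h t)) ` B1}"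
      unfolding pre_def \<phi>_def mem_translate_iff by (auto simp: algebra_simps)
    then show "meager_in (top_of_set K) {k. (k, t) \<in> pre B1 x}" using B1(6) by simp
  qed
  moreover have "pre (B0 \<union> B1) x = pre B0 x \<union> pre B1 x" unfolding pre_def by auto
  ultimately have "\<not> meager_in (top_of_set (K \<times> cube)) (pre B0 x)"
    using x meager_in_Un by metis
  moreover have "baire_property (top_of_set (K \<times> cube)) (pre B0 x)"
    unfolding pre_def by (rule baire_property_translate_preimage[OF add_cont \<phi> B0(1)])
  ultimately obtain k Q where k: "k \<in> K" "openin (top_of_set cube) Q" "Q \<noteq> {}"
      "meager_in (top_of_set cube) (Q - {t. (k, t) \<in> pre B0 x})"
    using nonmeager_product_section[OF sc compact_open_not_meager[OF B1(4)], unfolded P] by force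
  have "Q - {t. (k, t) \<in> pre B0 x} = Q - {t \<in> cube. (g k - x) + h t \<in> B0}"
    using k(1) unfolding pre_def \<phi>_def mem_translate_iff by (auto simp: algebra_simps)
  then show ?thesis using k B0 by auto
qed

section \<open>Construction of the series\<close>

lemma dense_recurrent_sequence:
  fixes \<Omega> :: "'a::second_countable_topology set"
  assumes "open \<Omega>" "\<Omega> \<noteq> {}"
  obtains q :: "nat \<Rightarrow> 'a" where "\<And>n. q n \<in> \<Omega>"
    "\<And>U. open U \<Longrightarrow> U \<inter> \<Omega> \<noteq> {} \<Longrightarrow> \<exists>n. q n \<in> U"
    "\<And>n m. \<exists>j\<ge>m. q j = q n"
proof -
  obtain D :: "'a set" where D: "countable D" "\<And>X. open X \<Longrightarrow> X \<noteq> {} \<Longrightarrow> \<exists>d\<in>D. d \<in> X"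
    by (rule countable_dense_setE) blast
  define e where "e = from_nat_into (D \<inter> \<Omega>)"
  have "D \<inter> \<Omega> \<noteq> {}" using D(2)[OF assms] by auto
  then have range_e: "range e = D \<inter> \<Omega>" unfolding e_def using D(1) by simp
  define q where "q n = e (fst (prod_decode n))" for n
  show ?thesis
  proof (rule that[of q])
    show "q n \<in> \<Omega>" for n using range_e unfolding q_def by auto
    show "\<exists>n. q n \<in> U" if U: "open U" "U \<inter> \<Omega> \<noteq> {}" for U
    proof -
      obtain d where "d \<in> D" "d \<in> U \<inter> \<Omega>" using D(2)[OF open_Int[OF U(1) assms(1)] U(2)] by blast
      then obtain k where "e k = d" "d \<in> U" using range_e by (metis Int_iff rangeE)
      then have "q (prod_encode (k, 0)) \<in> U" unfolding q_def by simp
      then show ?thesis by blast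
    qed
    show "\<exists>j\<ge>m. q j = q n" for n m
      by (rule exI[of _ "prod_encode (fst (prod_decode n), m)"]) (simp add: q_def le_prod_encode_2)
  qed
qed

text \<open>Tube lemma consequence: for a compact C, all vectors w in some neighbourhood of 0
  move every point of C by less than e under all scalings s w, 0 \<le> s \<le> 1.\<close>

lemma uniformly_small_steps:
  fixes C :: "'a::{real_vector,metric_space} set"
  assumes add_cont: "continuous_on UNIV (\<lambda>p::'a \<times> 'a. fst p + snd p)"
    and scale_cont: "continuous_on UNIV (\<lambda>p::real \<times> 'a. fst p *\<^sub>R snd p)"
    and "compact C" "e > 0"
  obtains W where "open W" "0 \<in> W"
    "\<And>w a s. w \<in> W \<Longrightarrow> a \<in> C \<Longrightarrow> 0 \<le> s \<Longrightarrow> s \<le> 1 \<Longrightarrow> dist (a + s *\<^sub>R w) a < e"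
proof -
  define step where "step z = dist (fst (snd z) + snd (snd z) *\<^sub>R fst z) (fst (snd z))"
    for z :: "'a \<times> ('a \<times> real)"
  have "continuous_on UNIV step" unfolding step_def
    by (intro continuous_on_dist continuous_on_add_tvs[OF add_cont] continuous_on_scaleR_tvs[OF scale_cont]
        continuous_on_fst continuous_on_snd continuous_on_id)
  then have "open (step -` {..<e})" by (intro open_vimage) auto
  moreover have "{0} \<times> (C \<times> {0..1}) \<subseteq> step -` {..<e}" using assms(4) unfolding step_def by auto
  ultimately obtain W where W: "0 \<in> W" "open W" "W \<times> (C \<times> {0..1}) \<subseteq> step -` {..<e}"
    using Elementary_Topology.tube_lemma[OF compact_Times[OF assms(3) compact_Icc]] by metis
  show ?thesis
  proof (rule that[OF W(2,1)])
    fix w a and s :: real assume "w \<in> W" "a \<in> C" "0 \<le> s" "s \<le> 1"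
    then have "(w, (a, s)) \<in> W \<times> (C \<times> {0..1})" by simp
    then have "step (w, (a, s)) < e" using W(3) by blast
    then show "dist (a + s *\<^sub>R w) a < e" by (simp add: step_def)
  qed
qed

lemma small_step_to_large_value:
  fixes f :: "'a::{real_vector,metric_space} \<Rightarrow> real"
  assumes add_cont: "continuous_on UNIV (\<lambda>p::'a \<times> 'a. fst p + snd p)"
    and scale_cont: "continuous_on UNIV (\<lambda>p::real \<times> 'a. fst p *\<^sub>R snd p)"
    and O: "open \<Omega>" and q0: "q0 \<in> \<Omega>" and C: "compact C" and e: "e > 0"
    and unbounded: "\<And>U c. open U \<Longrightarrow> U \<subseteq> \<Omega> \<Longrightarrow> U \<noteq> {} \<Longrightarrow> \<exists>u\<in>U. c < f u"
  shows "\<exists>w. (\<forall>a\<in>C. \<forall>s\<in>{0..1}. dist (a + s *\<^sub>R w) a < e) \<and> c \<le> f (q0 + (1/8) *\<^sub>R w)"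
proof -
  obtain W where W: "open W" "0 \<in> W"
    "\<And>w a s. w \<in> W \<Longrightarrow> a \<in> C \<Longrightarrow> 0 \<le> s \<Longrightarrow> s \<le> 1 \<Longrightarrow> dist (a + s *\<^sub>R w) a < e"
    using uniformly_small_steps[OF add_cont scale_cont C e] by blast
  define U where "U = \<Omega> \<inter> (\<lambda>y. 8 *\<^sub>R y + (- 8 *\<^sub>R q0)) -` W"
  have "open U" unfolding U_def by (intro open_Int O open_affine_vimage[OF add_cont scale_cont W(1)])
  moreover have "q0 \<in> U" unfolding U_def using q0 W(2) by simp
  ultimately obtain y where y: "y \<in> U" "c < f y"
    using unbounded[of U c] unfolding U_def by blast
  define w where "w = 8 *\<^sub>R y + (- 8 *\<^sub>R q0)"
  have "q0 + (1/8) *\<^sub>R w = y" unfolding w_def by (simp add: scaleR_add_right scaleR_diff_right)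
  moreover have "w \<in> W" using y(1) unfolding U_def w_def by auto
  ultimately show ?thesis using W(3) y(2) by (intro exI[of _ w]) auto
qed

lemma fast_sequence_exists:
  fixes f :: "'a::{real_vector,metric_space} \<Rightarrow> real"
  assumes add_cont: "continuous_on UNIV (\<lambda>p::'a \<times> 'a. fst p + snd p)"
    and scale_cont: "continuous_on UNIV (\<lambda>p::real \<times> 'a. fst p *\<^sub>R snd p)"
    and O: "open \<Omega>" and q: "\<And>n. q n \<in> \<Omega>"
    and unbounded: "\<And>U c. open U \<Longrightarrow> U \<subseteq> \<Omega> \<Longrightarrow> U \<noteq> {} \<Longrightarrow> \<exists>u\<in>U. c < f u"
  obtains v where "fast_on_cube v" "\<And>n. real n \<le> f (q n + (1/8) *\<^sub>R v n)"
proof -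
  define good where "good v n w \<longleftrightarrow>
      (\<forall>t\<in>cube. dist (psum v n t + t n *\<^sub>R w) (psum v n t) < (1/2)^n) \<and>
      real n \<le> f (q n + (1/8) *\<^sub>R w)"
    for v :: "nat \<Rightarrow> 'a" and n w
  have step: "\<exists>w. good v n w" for v n
  proof -
    have "compact (psum v n ` cube)"
      by (intro compact_continuous_image psum_continuous[OF add_cont scale_cont] compact_cube)
    moreover have "(0::real) < (1/2)^n" by simp
    ultimately obtain w where "\<forall>a\<in>psum v n ` cube. \<forall>s\<in>{0..1}. dist (a + s *\<^sub>R w) a < (1/2)^n"
      "real n \<le> f (q n + (1/8) *\<^sub>R w)"
      using small_step_to_large_value[OF add_cont scale_cont O q[of n] _ _ unbounded, where c = "real n"]
      by blast
    then have "good v n w" unfolding good_def by (auto simp: cube_def)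
    then show ?thesis by blast
  qed
  txt \<open>Whether w is a good n-th term depends only on the terms before n.\<close>
  have "\<exists>v. \<forall>n. good v n (v n)"
  proof (rule dependent_wellorder_choice)
    fix w :: 'a and u v :: "nat \<Rightarrow> 'a" and n :: nat
    assume "\<And>m. m < n \<Longrightarrow> u m = v m"
    then have "psum u n = psum v n" by (intro ext psum_cong)
    then show "good u n w = good v n w" unfolding good_def by simp
  qed (rule step)
  then obtain v where v: "\<And>n. good v n (v n)" by blast
  show ?thesis
  proof (rule that[of v])
    show "fast_on_cube v" using v unfolding fast_on_cube_def good_def psum_Suc by blast
    show "real n \<le> f (q n + (1/8) *\<^sub>R v n)" for n using v unfolding good_def by blast
  qed
qed

text \<open>The sublevel sets of a Jensen convex function are closed under midpoints; via the
  midpoint affinity of the cube sum, points of the cube that are midpoints of pairs mapped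
  into a sublevel set are mapped into it as well.\<close>

lemma jensen_sublevel_midpoint:
  fixes f :: "'a::real_vector \<Rightarrow> real"
  assumes J: "jensen_convex_on \<Omega> f" and C: "convex \<Omega>"
    and "a \<in> \<Omega>" "b \<in> \<Omega>" "f a \<le> M" "f b \<le> M"
  shows "(1/2) *\<^sub>R (a + b) \<in> \<Omega> \<and> f ((1/2) *\<^sub>R (a + b)) \<le> M"
proof
  show "(1/2) *\<^sub>R (a + b) \<in> \<Omega>"
    using C assms(3,4) unfolding convex_def by (simp add: scaleR_add_right)
  have "f ((1/2) *\<^sub>R (a + b)) \<le> (f a + f b) / 2"
    using J assms(3,4) unfolding jensen_convex_on_def by blast
  then show "f ((1/2) *\<^sub>R (a + b)) \<le> M" using assms(5,6) by argo
qed

lemma cube_midpoints_sublevel: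
  fixes f :: "'a::{real_vector,complete_space} \<Rightarrow> real"
  assumes add_cont: "continuous_on UNIV (\<lambda>p::'a \<times> 'a. fst p + snd p)"
    and scale_cont: "continuous_on UNIV (\<lambda>p::real \<times> 'a. fst p *\<^sub>R snd p)"
    and J: "jensen_convex_on \<Omega> f" and C: "convex \<Omega>" and fast: "fast_on_cube v"
    and G: "G \<subseteq> cube" "\<And>t. t \<in> G \<Longrightarrow> a + cube_sum v t \<in> \<Omega> \<and> f (a + cube_sum v t) \<le> M"
    and y: "y \<in> cube_midpoints G"
  shows "a + cube_sum v y \<in> \<Omega> \<and> f (a + cube_sum v y) \<le> M"
proof -
  obtain t t' where t: "t \<in> G" "t' \<in> G" and y_eq: "y = (\<lambda>i. (t i + t' i) / 2)"
    using y unfolding cube_midpoints_def by blast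
  have "a + cube_sum v y = (1/2) *\<^sub>R ((a + cube_sum v t) + (a + cube_sum v t'))"
    unfolding y_eq cube_sum_midpoint[OF add_cont scale_cont fast G(1)[THEN subsetD, OF t(1)]
        G(1)[THEN subsetD, OF t(2)]]
    by (simp add: algebra_simps flip: scaleR_add_left)
  then show ?thesis
    using jensen_sublevel_midpoint[OF J C, of "a + cube_sum v t" "a + cube_sum v t'" M]
      G(2)[OF t(1)] G(2)[OF t(2)] by simp
qed

lemma sublevel_far_points:
  fixes f :: "'a::{real_vector,complete_space} \<Rightarrow> real"
  assumes add_cont: "continuous_on UNIV (\<lambda>p::'a \<times> 'a. fst p + snd p)"
    and scale_cont: "continuous_on UNIV (\<lambda>p::real \<times> 'a. fst p *\<^sub>R snd p)"
    and J: "jensen_convex_on \<Omega> f" and C: "convex \<Omega>" and fast: "fast_on_cube v"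
    and Q: "openin (top_of_set cube) Q" "Q \<noteq> {}"
      "meager_in (top_of_set cube) (Q - {t \<in> cube. a + cube_sum v t \<in> B})"
    and B: "\<And>b. b \<in> B \<Longrightarrow> b \<in> \<Omega> \<and> f b \<le> M"
  obtains p N where "p \<in> \<Omega>" "\<And>j. N \<le> j \<Longrightarrow> p + (1/4) *\<^sub>R v j \<in> \<Omega> \<and> f (p + (1/4) *\<^sub>R v j) \<le> M"
proof -
  let ?G = "{t \<in> cube. a + cube_sum v t \<in> B}"
  obtain y N where y: "y \<in> cube" "\<And>j. N \<le> j \<Longrightarrow> y j = 1/2" "y \<in> cube_midpoints ?G"
      "\<And>j. N \<le> j \<Longrightarrow> y(j := 3/4) \<in> cube_midpoints ?G"
    using comeager_cube_midpoints[OF Q] by blast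
  have sublevel: "a + cube_sum v z \<in> \<Omega> \<and> f (a + cube_sum v z) \<le> M" if "z \<in> cube_midpoints ?G" for z
    using cube_midpoints_sublevel[OF add_cont scale_cont J C fast, of ?G a M z] B that by blast
  have "a + cube_sum v y + (1/4) *\<^sub>R v j \<in> \<Omega> \<and> f (a + cube_sum v y + (1/4) *\<^sub>R v j) \<le> M"
    if "N \<le> j" for j
  proof -
    have "y j + 1/4 = 3/4" using y(2)[OF that] by simp
    then have shifted: "y(j := y j + 1/4) = y(j := 3/4)" by (simp only:)
    have "y(j := y j + 1/4) \<in> cube" using y(1) unfolding shifted by (simp add: cube_def)
    from cube_sum_shift[OF add_cont fast y(1) this]
    have "cube_sum v (y(j := 3/4)) = cube_sum v y + (1/4) *\<^sub>R v j" unfolding shifted .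
    then show ?thesis using sublevel[OF y(4)[OF that]] by (simp add: add.assoc)
  qed
  with sublevel[OF y(3)] show ?thesis using that by blast
qed

text \<open>Final step: if p and all p + v j / 4, j \<ge> N, lie in the sublevel set {f \<le> M}, pick
  a value d of the recurrent dense sequence q close to p, so that r = 2 d - p \<in> \<Omega>.  For the
  infinitely many j with q j = d, the point q j + v j / 8 is the midpoint of p + v j / 4 and r,
  so f there is at most (M + f r) / 2, which contradicts f (q j + v j / 8) \<ge> j for large j.\<close>

lemma jensen_recurrent_contradiction:
  fixes f :: "'a::{real_vector,topological_space} \<Rightarrow> real"
  assumes add_cont: "continuous_on UNIV (\<lambda>p::'a \<times> 'a. fst p + snd p)"
    and scale_cont: "continuous_on UNIV (\<lambda>p::real \<times> 'a. fst p *\<^sub>R snd p)"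
    and J: "jensen_convex_on \<Omega> f" and O: "open \<Omega>"
    and dense: "\<And>U. open U \<Longrightarrow> U \<inter> \<Omega> \<noteq> {} \<Longrightarrow> \<exists>n. q n \<in> U"
    and recurrent: "\<And>n m. \<exists>j\<ge>m. q j = q n"
    and big: "\<And>n. real n \<le> f (q n + (1/8) *\<^sub>R v n)"
    and p: "p \<in> \<Omega>" and far: "\<And>j. N \<le> j \<Longrightarrow> p + (1/4) *\<^sub>R v j \<in> \<Omega> \<and> f (p + (1/4) *\<^sub>R v j) \<le> M"
  shows False
proof -
  have "open ((\<lambda>z. 2 *\<^sub>R z + (- p)) -` \<Omega>)" by (rule open_affine_vimage[OF add_cont scale_cont O])
  moreover have "p \<in> (\<lambda>z. 2 *\<^sub>R z + (- p)) -` \<Omega>" using p by (simp add: scaleR_2)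
  ultimately obtain n where "2 *\<^sub>R q n + (- p) \<in> \<Omega>" using dense p by blast
  define r where "r = 2 *\<^sub>R q n + (- p)"
  have r: "r \<in> \<Omega>" unfolding r_def by fact
  obtain j where j: "N + nat \<lceil>(M + f r) / 2\<rceil> + 1 \<le> j" "q j = q n"
    using recurrent by blast
  have mid: "q j + (1/8) *\<^sub>R v j = (1/2) *\<^sub>R ((p + (1/4) *\<^sub>R v j) + r)"
    unfolding r_def j(2) by (simp add: algebra_simps)
  have "real j \<le> f (q j + (1/8) *\<^sub>R v j)" by (rule big)
  also have "\<dots> \<le> (f (p + (1/4) *\<^sub>R v j) + f r) / 2"
    unfolding mid using J far[of j] j(1) r unfolding jensen_convex_on_def by simp
  also have "\<dots> \<le> (M + f r) / 2" using far[of j] j(1) by simp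
  also have "\<dots> < real j" using j(1) real_nat_ceiling_ge[of "(M + f r) / 2"] by linarith
  finally show False by simp
qed

theorem mainTheorem5:
  fixes \<Omega> T :: "'a::{polish_space, real_vector} set"
    and f :: "'a \<Rightarrow> real"
  assumes add_cont: "continuous_on UNIV (\<lambda>p::'a \<times> 'a. fst p + snd p)"
    and scale_cont: "continuous_on UNIV (\<lambda>p::real \<times> 'a. fst p *\<^sub>R snd p)"
    and "\<Omega> \<noteq> {}" and "convex \<Omega>" and "open \<Omega>"
    and "jensen_convex_on \<Omega> f"
    and "T \<subseteq> \<Omega>" and "D_measurable T" and "\<not> haar_meager T"
    and "\<exists>M. \<forall>t\<in>T. f t \<le> M"
  shows "continuous_on \<Omega> f"
proof (rule ccontr)
  assume discont: "\<not> continuous_on \<Omega> f"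
  obtain M where M: "\<And>t. t \<in> T \<Longrightarrow> f t \<le> M" using assms(10) by blast
  have unbounded: "\<exists>u\<in>U. c < f u" if "open U" "U \<subseteq> \<Omega>" "U \<noteq> {}" for U c
    by (rule jensen_discontinuous_unbounded[OF add_cont scale_cont assms(6,4,5) discont that])
  obtain q :: "nat \<Rightarrow> 'a" where q: "\<And>n. q n \<in> \<Omega>" "\<And>U. open U \<Longrightarrow> U \<inter> \<Omega> \<noteq> {} \<Longrightarrow> \<exists>n. q n \<in> U"
      "\<And>n m. \<exists>j\<ge>m. q j = q n"
    using dense_recurrent_sequence[OF assms(5,3)] by blast
  obtain v :: "nat \<Rightarrow> 'a" where v: "fast_on_cube v" "\<And>n. real n \<le> f (q n + (1/8) *\<^sub>R v n)"
    using fast_sequence_exists[OF add_cont scale_cont assms(5), where q = q, OF q(1) unbounded]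
    by blast
  obtain B0 a Q where B0: "B0 \<subseteq> T" and Q: "openin (top_of_set cube) Q" "Q \<noteq> {}"
      "meager_in (top_of_set cube) (Q - {t \<in> cube. a + cube_sum v t \<in> B0})"
    using D_measurable_comeager_pullback[OF add_cont assms(8,9)
        cube_sum_continuous[OF add_cont scale_cont v(1)]] by blast
  have "b \<in> \<Omega> \<and> f b \<le> M" if "b \<in> B0" for b using that B0 assms(7) M by blast
  then obtain p N where p: "p \<in> \<Omega>"
      and far: "\<And>j. N \<le> j \<Longrightarrow> p + (1/4) *\<^sub>R v j \<in> \<Omega> \<and> f (p + (1/4) *\<^sub>R v j) \<le> M"
    using sublevel_far_points[OF add_cont scale_cont assms(6,4) v(1) Q] by blast
  show False
    by (rule jensen_recurrent_contradiction[OF add_cont scale_cont assms(6,5), where q = q and v = v,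
          OF q(2,3) v(2) p far])
qed

end
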